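(* Let $\mathcal{A}$ be a complex Banach algebra with unity, $a,b\in\mathcal{A}$ and $k$ a positive integer. Suppose $\alpha_{1}\alpha_{2}\cdots\alpha_{k}ab=0$ for all $\alpha_{1},\dots,\alpha_{k}\in\{a,b\}$. Then $a$ and $b$ are both g$\pi$-Hirano invertible if and only if $a+b$ is g$\pi$-Hirano invertible.
   Context: $\mathcal{A}^{qnil}$ denotes the set of quasinilpotent elements of $\mathcal{A}$ (spectrum equal to $\{0\}$). An element $a\in\mathcal{A}$ is g$\pi$-Hirano invertible if there exists $x\in\mathcal{A}$ with $xax=x$, $ax=xa$ and $a-a^{n+2}x\in\mathcal{A}^{qnil}$ for some positive integer $n$. *)

theory Defs
  imports "HOL-Analysis.Analysis"
begin

text \<open>Complex unital Banach algebras: a real unital Banach algebra equipped with a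
compatible complex scalar multiplication (the library has no such class).\<close>

class complex_banach_algebra_1 = real_normed_algebra_1 + banach +
  fixes scaleC :: "complex \<Rightarrow> 'a \<Rightarrow> 'a"
  assumes scaleC_add_right: "scaleC c (x + y) = scaleC c x + scaleC c y"
    and scaleC_add_left: "scaleC (c + d) x = scaleC c x + scaleC d x"
    and scaleC_scaleC: "scaleC c (scaleC d x) = scaleC (c * d) x"
    and scaleC_one: "scaleC 1 x = x"
    and scaleR_scaleC: "scaleR r x = scaleC (complex_of_real r) x"
    and norm_scaleC: "norm (scaleC c x) = cmod c * norm x"
    and mult_scaleC_left: "scaleC c x * y = scaleC c (x * y)"
    and mult_scaleC_right: "x * scaleC c y = scaleC c (x * y)"

definition invertible_elem :: "'a::ring_1 \<Rightarrow> bool" where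
  "invertible_elem a \<longleftrightarrow> (\<exists>y. a * y = 1 \<and> y * a = 1)"

definition spectrum :: "'a::complex_banach_algebra_1 \<Rightarrow> complex set" where
  "spectrum a = {z. \<not> invertible_elem (scaleC z 1 - a)}"

definition quasinilpotent :: "'a::complex_banach_algebra_1 \<Rightarrow> bool" where
  "quasinilpotent a \<longleftrightarrow> spectrum a = {0}"

definition gpi_Hirano_invertible :: "'a::complex_banach_algebra_1 \<Rightarrow> bool" where
  "gpi_Hirano_invertible a \<longleftrightarrow>
     (\<exists>x. x * a * x = x \<and> a * x = x * a \<and>
          (\<exists>n::nat. n > 0 \<and> quasinilpotent (a - a ^ (n + 2) * x)))"

end

theory Submission
  imports Defs "HOL-Computational_Algebra.Fundamental_Theorem_Algebra"
    "HOL-Computational_Algebra.Formal_Power_Series"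
begin

text \<open>An element \<open>a\<close> is g\<pi>-Hirano invertible exactly when its spectrum lies in
  \<open>{0} \<union> {z. z\<^sup>n = 1}\<close> for some \<open>n > 0\<close>. One direction splits \<open>a\<close> with the idempotent
  \<open>p = a x\<close>: on \<open>1 - p\<close> the element \<open>a\<close> is quasinilpotent, on \<open>p\<close> the element \<open>a - a\<^bsup>n+1\<^esup>\<close> is.
  Conversely the idempotent is recovered from \<open>e = a\<^sup>n\<close>, for which \<open>e - e\<^sup>2\<close> is
  quasinilpotent, by a binomial square-root series; its convergence needs that quasinilpotent
  elements have spectral radius \<open>0\<close>, which is proved below without vector-valued complex analysis.

  The word condition gives \<open>(a + b)\<^sup>k a b = 0\<close>, hence for \<open>z \<noteq> 0\<close> the factorisation
  \<open>(z - a)(z - b) = (z - (a + b))(z + E)\<close> with \<open>E\<close> nilpotent. So the spectrum of \<open>a + b\<close> lies in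
  those of \<open>a\<close> and \<open>b\<close> together with \<open>0\<close>; conversely, off a finite set \<open>F\<close> containing \<open>0\<close>
  and the spectrum of \<open>a + b\<close>, the element \<open>z - a\<close> has a continuous right inverse and is
  invertible for large \<open>z\<close>, hence everywhere on the connected set \<open>- F\<close>.\<close>

lemma scaleC_zero_left [simp]: "scaleC 0 x = (0::'a::complex_banach_algebra_1)"
  using scaleC_add_left[of 0 0 x] by simp

lemma scaleC_zero_right [simp]: "scaleC c 0 = (0::'a::complex_banach_algebra_1)"
  using scaleC_add_right[of c 0 "0::'a"] by simp

lemma scaleC_minus_left: "scaleC (- c) x = - scaleC c (x::'a::complex_banach_algebra_1)"
  using scaleC_add_left[of c "- c" x] by (simp add: add_eq_0_iff2)

lemma scaleC_minus_right: "scaleC c (- x) = - scaleC c (x::'a::complex_banach_algebra_1)"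
  using scaleC_add_right[of c x "- x"] by (simp add: add_eq_0_iff2)

lemma scaleC_diff_left: "scaleC (c - d) x = scaleC c x - scaleC d (x::'a::complex_banach_algebra_1)"
  using scaleC_add_left[of c "- d" x] by (simp add: scaleC_minus_left)

lemma scaleC_diff_right: "scaleC c (x - y) = scaleC c x - scaleC c (y::'a::complex_banach_algebra_1)"
  using scaleC_add_right[of c x "- y"] by (simp add: scaleC_minus_right)

lemma scaleC_1_mult [simp]: "scaleC c 1 * x = scaleC c (x::'a::complex_banach_algebra_1)"
  by (simp add: mult_scaleC_left)

lemma mult_scaleC_1 [simp]: "x * scaleC c 1 = scaleC c (x::'a::complex_banach_algebra_1)"
  by (simp add: mult_scaleC_right)

lemma scaleC_mult_scaleC:
  "scaleC c x * scaleC d y = scaleC (c * d) (x * y :: 'a::complex_banach_algebra_1)"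
  by (simp add: mult_scaleC_left mult_scaleC_right scaleC_scaleC mult.commute)

lemma scaleC_power: "scaleC c x ^ n = scaleC (c ^ n) (x ^ n :: 'a::complex_banach_algebra_1)"
  by (induction n) (simp_all add: scaleC_mult_scaleC scaleC_one)

lemma scaleC_sum_right: "scaleC c (sum f A) = (\<Sum>i\<in>A. scaleC c (f i :: 'a::complex_banach_algebra_1))"
  by (induction A rule: infinite_finite_induct) (auto simp: scaleC_add_right)

lemma bounded_bilinear_scaleC:
  "bounded_bilinear (scaleC :: complex \<Rightarrow> 'a::complex_banach_algebra_1 \<Rightarrow> 'a)"
proof
  fix r :: real and c c' :: complex and x x' :: 'a
  show "scaleC (c + c') x = scaleC c x + scaleC c' x" by (rule scaleC_add_left)
  show "scaleC c (x + x') = scaleC c x + scaleC c x'" by (rule scaleC_add_right)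
  show "scaleC (scaleR r c) x = scaleR r (scaleC c x)"
    by (simp add: scaleR_scaleC scaleC_scaleC scaleR_conv_of_real)
  show "scaleC c (scaleR r x) = scaleR r (scaleC c x)"
    by (simp add: scaleR_scaleC scaleC_scaleC mult.commute)
  show "\<exists>K. \<forall>c (x::'a). norm (scaleC c x) \<le> norm c * norm x * K"
    by (rule exI[of _ 1]) (simp add: norm_scaleC)
qed

lemmas continuous_on_scaleC [continuous_intros] =
  bounded_bilinear.continuous_on[OF bounded_bilinear_scaleC]

section \<open>Invertible and commuting elements\<close>

definition inv_elem :: "'a::ring_1 \<Rightarrow> 'a" where
  "inv_elem u = (SOME y. u * y = 1 \<and> y * u = 1)"

definition commute :: "'a::ring_1 \<Rightarrow> 'a \<Rightarrow> bool" where
  "commute u v \<longleftrightarrow> u * v = v * u"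

lemma invertible_elemI: "u * v = 1 \<Longrightarrow> v * u = 1 \<Longrightarrow> invertible_elem u"
  unfolding invertible_elem_def by blast

lemma right_inv_elem: "invertible_elem u \<Longrightarrow> u * inv_elem u = 1"
  unfolding invertible_elem_def inv_elem_def by (metis (mono_tags, lifting) someI_ex)

lemma left_inv_elem: "invertible_elem u \<Longrightarrow> inv_elem u * u = 1"
  unfolding invertible_elem_def inv_elem_def by (metis (mono_tags, lifting) someI_ex)

lemma inv_elem_unique_right:
  assumes "invertible_elem u" "u * v = 1"
  shows "v = inv_elem u"
proof -
  have "inv_elem u = inv_elem u * (u * v)" using assms(2) by simp
  also have "\<dots> = v" using left_inv_elem[OF assms(1)] by (simp flip: mult.assoc)
  finally show ?thesis by simp
qed

lemma inv_elem_eqI: "u * v = 1 \<Longrightarrow> v * u = 1 \<Longrightarrow> inv_elem u = v"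
  using inv_elem_unique_right invertible_elemI by metis

lemma invertible_elem_one [simp]: "invertible_elem 1"
  and inv_elem_one [simp]: "inv_elem 1 = 1"
  by (simp_all add: invertible_elemI inv_elem_eqI)

lemma invertible_elem_minus: "invertible_elem u \<Longrightarrow> invertible_elem (- u)"
  using invertible_elemI[of "- u" "- inv_elem u"] left_inv_elem[of u] right_inv_elem[of u] by simp

lemma invertible_elem_mult:
  assumes "invertible_elem u" "invertible_elem v"
  shows "invertible_elem (u * v)"
proof (rule invertible_elemI)
  show "u * v * (inv_elem v * inv_elem u) = 1"
    using right_inv_elem[OF assms(2)] right_inv_elem[OF assms(1)]
    by (simp add: mult.assoc) (simp flip: mult.assoc)
  show "inv_elem v * inv_elem u * (u * v) = 1"
    using left_inv_elem[OF assms(2)] left_inv_elem[OF assms(1)]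
    by (simp add: mult.assoc) (simp flip: mult.assoc)
qed

lemma invertible_elem_inv_elem: "invertible_elem u \<Longrightarrow> invertible_elem (inv_elem u)"
  using invertible_elemI left_inv_elem right_inv_elem by blast

lemma inv_elem_diff:
  assumes "invertible_elem u" "invertible_elem v"
  shows "inv_elem u - inv_elem v = inv_elem u * (v - u) * inv_elem v"
proof -
  have "inv_elem u * (v - u) * inv_elem v = inv_elem u * (v * inv_elem v) - (inv_elem u * u) * inv_elem v"
    by (simp only: left_diff_distrib right_diff_distrib mult.assoc)
  then show ?thesis using left_inv_elem[OF assms(1)] right_inv_elem[OF assms(2)] by simp
qed

lemma invertible_elem_one_minus_nilpotent:
  fixes N :: "'a::ring_1"
  assumes "N ^ m = 0"
  shows "invertible_elem (1 - N)"
proof (rule invertible_elemI)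
  have telescope: "(\<Sum>i<m. N ^ i - N ^ Suc i) = 1"
    using sum_lessThan_telescope'[of "\<lambda>i. N ^ i" m] assms by simp
  then show "(1 - N) * (\<Sum>i<m. N ^ i) = 1"
    by (simp add: sum_distrib_left left_diff_distrib sum_subtractf)
  show "(\<Sum>i<m. N ^ i) * (1 - N) = 1"
    using telescope by (simp add: sum_distrib_right right_diff_distrib power_commutes sum_subtractf)
qed

lemma commute_sym: "commute u v \<Longrightarrow> commute v u"
  by (simp add: commute_def)

lemma commute_refl [simp]: "commute u u"
  by (simp add: commute_def)

lemma commute_one [simp]: "commute 1 u" "commute u 1"
  by (simp_all add: commute_def)

lemma commute_add: "commute u v \<Longrightarrow> commute u w \<Longrightarrow> commute u (v + w)"
  by (simp add: commute_def algebra_simps)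

lemma commute_diff: "commute u v \<Longrightarrow> commute u w \<Longrightarrow> commute u (v - w)"
  by (simp add: commute_def algebra_simps)

lemma commute_mult: "commute u v \<Longrightarrow> commute u w \<Longrightarrow> commute u (v * w)"
  by (simp add: commute_def flip: mult.assoc) (simp add: mult.assoc)

lemma commute_power: "commute u v \<Longrightarrow> commute u (v ^ n)"
  by (induction n) (simp_all add: commute_mult)

lemma commute_inv_elem:
  assumes "commute u v" "invertible_elem v"
  shows "commute u (inv_elem v)"
proof -
  have "inv_elem v * u = inv_elem v * (u * v) * inv_elem v"
    using right_inv_elem[OF assms(2)] by (simp add: mult.assoc)
  also have "\<dots> = u * inv_elem v"
    using assms(1) left_inv_elem[OF assms(2)] by (simp add: commute_def flip: mult.assoc)
  finally show ?thesis by (simp add: commute_def)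
qed

lemma power_mult_commute: "commute u v \<Longrightarrow> (u * v) ^ n = u ^ n * v ^ n"
proof (induction n)
  case (Suc n)
  have "commute v (u ^ n)" using commute_sym[OF Suc.prems] by (rule commute_power)
  then have "(u * v) ^ Suc n = u * (v * u ^ n) * v ^ n"
    using Suc by (simp add: mult.assoc)
  also have "\<dots> = u ^ Suc n * v ^ Suc n"
    using \<open>commute v (u ^ n)\<close> by (simp add: commute_def mult.assoc power_commutes)
  finally show ?case .
qed simp

lemma invertible_elem_commute_right_inverse:
  "commute u v \<Longrightarrow> u * v = 1 \<Longrightarrow> invertible_elem u"
  by (metis commute_def invertible_elemI)

lemma invertible_elem_of_square:
  assumes "invertible_elem (b * b)"
  shows "invertible_elem b"
proof (rule invertible_elem_commute_right_inverse)
  have "commute b (inv_elem (b * b))"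
    by (rule commute_inv_elem[OF _ assms]) (simp add: commute_def mult.assoc)
  then show "commute b (b * inv_elem (b * b))"
    by (simp add: commute_mult)
  show "b * (b * inv_elem (b * b)) = 1"
    using right_inv_elem[OF assms] by (simp flip: mult.assoc)
qed

lemma commute_scaleC_1 [simp]: "commute u (scaleC c 1)" "commute (scaleC c 1) u"
  for u :: "'a::complex_banach_algebra_1"
  by (simp_all add: commute_def)

lemma invertible_elem_scaleC:
  fixes u :: "'a::complex_banach_algebra_1"
  assumes "c \<noteq> 0" "invertible_elem u"
  shows "invertible_elem (scaleC c u)"
  using assms by (intro invertible_elemI[of _ "scaleC (1 / c) (inv_elem u)"])
    (simp_all add: scaleC_mult_scaleC right_inv_elem left_inv_elem scaleC_one)

definition bicommutant :: "'a::ring_1 \<Rightarrow> 'a set" where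
  "bicommutant a = {u. \<forall>v. commute v a \<longrightarrow> commute v u}"

lemma bicommutant_commute:
  "u \<in> bicommutant a \<Longrightarrow> w \<in> bicommutant a \<Longrightarrow> commute u w"
  by (simp add: bicommutant_def) (meson commute_refl commute_sym)

lemma bicommutant_commute_base: "u \<in> bicommutant a \<Longrightarrow> commute a u"
  by (simp add: bicommutant_def)

lemma bicommutant_add:
  "u \<in> bicommutant a \<Longrightarrow> w \<in> bicommutant a \<Longrightarrow> u + w \<in> bicommutant a"
  by (simp add: bicommutant_def commute_add)

lemma bicommutant_diff:
  "u \<in> bicommutant a \<Longrightarrow> w \<in> bicommutant a \<Longrightarrow> u - w \<in> bicommutant a"
  by (simp add: bicommutant_def commute_diff)

lemma bicommutant_mult:
  "u \<in> bicommutant a \<Longrightarrow> w \<in> bicommutant a \<Longrightarrow> u * w \<in> bicommutant a"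
  by (simp add: bicommutant_def commute_mult)

lemma bicommutant_power: "u \<in> bicommutant a \<Longrightarrow> u ^ n \<in> bicommutant a"
  by (simp add: bicommutant_def commute_power)

lemma bicommutant_inv_elem:
  "u \<in> bicommutant a \<Longrightarrow> invertible_elem u \<Longrightarrow> inv_elem u \<in> bicommutant a"
  by (simp add: bicommutant_def commute_inv_elem)

lemma bicommutant_trans: "u \<in> bicommutant a \<Longrightarrow> w \<in> bicommutant u \<Longrightarrow> w \<in> bicommutant a"
  unfolding bicommutant_def by blast

lemma bicommutant_self: "a \<in> bicommutant a"
  and bicommutant_zero: "0 \<in> bicommutant a"
  and bicommutant_one: "1 \<in> bicommutant a"
  by (simp_all add: bicommutant_def commute_def)

lemma bicommutant_scaleR:
  "u \<in> bicommutant a \<Longrightarrow> scaleR r u \<in> bicommutant (a::'a::real_normed_algebra_1)"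
  by (simp add: bicommutant_def commute_def mult_scaleR_right)

lemma bicommutant_scaleC:
  "u \<in> bicommutant a \<Longrightarrow> scaleC c u \<in> bicommutant (a::'a::complex_banach_algebra_1)"
  by (simp add: bicommutant_def commute_def mult_scaleC_left mult_scaleC_right)

lemma bicommutant_sum:
  "(\<And>i. i \<in> I \<Longrightarrow> f i \<in> bicommutant a) \<Longrightarrow> sum f I \<in> bicommutant a"
  by (induction I rule: infinite_finite_induct)
    (auto intro: bicommutant_add bicommutant_zero)

lemma bicommutant_suminf:
  fixes f :: "nat \<Rightarrow> 'a::{real_normed_algebra_1,banach}"
  assumes "summable f" "\<And>m. f m \<in> bicommutant a"
  shows "suminf f \<in> bicommutant a"
  unfolding bicommutant_def
proof (intro CollectI allI impI)
  fix v assume "commute v a"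
  then have "v * f m = f m * v" for m
    using assms(2) by (simp add: bicommutant_def commute_def)
  then show "commute v (suminf f)"
    using suminf_mult[OF assms(1), of v] suminf_mult2[OF assms(1), of v] by (simp add: commute_def)
qed

lemmas bicommutant_intros = bicommutant_self bicommutant_zero bicommutant_one bicommutant_add
  bicommutant_diff bicommutant_mult bicommutant_power bicommutant_scaleR bicommutant_scaleC
  bicommutant_sum

section \<open>Neumann series and continuity of inversion\<close>

lemma neumann_series:
  fixes u :: "'a::{real_normed_algebra_1,banach}"
  assumes "summable (\<lambda>n. u ^ n)"
  shows "invertible_elem (1 - u)" "inv_elem (1 - u) = (\<Sum>n. u ^ n)"
proof -
  have tail: "(\<Sum>n. u ^ Suc n) = (\<Sum>n. u ^ n) - 1"
    using suminf_split_head[OF assms] by simp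
  have "u * (\<Sum>n. u ^ n) = (\<Sum>n. u ^ Suc n)" "(\<Sum>n. u ^ n) * u = (\<Sum>n. u ^ Suc n)"
    using suminf_mult[OF assms, of u] suminf_mult2[OF assms, of u] by (simp_all add: power_commutes)
  then have "(1 - u) * (\<Sum>n. u ^ n) = 1" "(\<Sum>n. u ^ n) * (1 - u) = 1"
    using tail by (simp_all add: algebra_simps)
  then show "invertible_elem (1 - u)" "inv_elem (1 - u) = (\<Sum>n. u ^ n)"
    by (auto intro: invertible_elemI inv_elem_eqI)
qed

lemma invertible_elem_one_minus_small:
  fixes u :: "'a::{real_normed_algebra_1,banach}"
  assumes "norm u < 1"
  shows "invertible_elem (1 - u)" "norm (inv_elem (1 - u)) \<le> 1 / (1 - norm u)"
proof -
  have geometric: "summable (\<lambda>n. norm u ^ n)"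
    using assms by (simp add: summable_geometric)
  have "summable (\<lambda>n. norm (u ^ n))"
    by (rule summable_comparison_test'[OF geometric]) (simp add: norm_power_ineq)
  then have summable: "summable (\<lambda>n. u ^ n)" by (rule summable_norm_cancel)
  show "invertible_elem (1 - u)" by (rule neumann_series(1)[OF summable])
  have "norm (\<Sum>n. u ^ n) \<le> (\<Sum>n. norm u ^ n)"
    by (rule norm_suminf_le[OF _ geometric]) (simp add: norm_power_ineq)
  then show "norm (inv_elem (1 - u)) \<le> 1 / (1 - norm u)"
    using assms by (simp add: neumann_series(2)[OF summable] suminf_geometric)
qed

lemma invertible_elem_perturb:
  fixes v h :: "'a::{real_normed_algebra_1,banach}"
  assumes v: "invertible_elem v" and h: "norm h * norm (inv_elem v) \<le> 1/2"
  shows "invertible_elem (v + h)" "norm (inv_elem (v + h)) \<le> 2 * norm (inv_elem v)"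
proof -
  define w where "w = - (inv_elem v * h)"
  have "norm w \<le> 1/2"
    using h norm_mult_ineq[of "inv_elem v" h] by (simp add: w_def mult.commute)
  moreover from this have "1 / (1 - norm w) \<le> 2"
    by (simp add: field_simps)
  ultimately have w: "invertible_elem (1 - w)" "norm (inv_elem (1 - w)) \<le> 2"
    using invertible_elem_one_minus_small[of w] by auto
  have "v * (1 - w) = v + (v * inv_elem v) * h"
    by (simp add: w_def algebra_simps)
  then have vh: "v + h = v * (1 - w)"
    using right_inv_elem[OF v] by simp
  show inv: "invertible_elem (v + h)"
    unfolding vh by (rule invertible_elem_mult[OF v w(1)])
  have "(v + h) * (inv_elem (1 - w) * inv_elem v) = 1"
    unfolding vh using right_inv_elem[OF w(1)] right_inv_elem[OF v]
    by (simp add: mult.assoc) (simp flip: mult.assoc)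
  then have "inv_elem (v + h) = inv_elem (1 - w) * inv_elem v"
    using inv_elem_unique_right[OF inv] by simp
  then show "norm (inv_elem (v + h)) \<le> 2 * norm (inv_elem v)"
    using norm_mult_ineq[of "inv_elem (1 - w)" "inv_elem v"] w(2)
    by (metis mult_right_mono norm_ge_zero order_trans)
qed

lemma invertible_elem_near:
  fixes u v :: "'a::{real_normed_algebra_1,banach}"
  assumes v: "invertible_elem v" and uv: "dist u v < 1 / (2 * (norm (inv_elem v) + 1))"
  shows "invertible_elem u"
    and "norm (inv_elem u - inv_elem v) \<le> 2 * norm (inv_elem v) ^ 2 * norm (u - v)"
proof -
  have "norm (u - v) * (2 * norm (inv_elem v) + 2) < 1"
    using uv by (simp add: dist_norm pos_less_divide_eq add_nonneg_pos)
  then have "2 * (norm (u - v) * norm (inv_elem v)) < 1 - 2 * norm (u - v)"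
    by (simp add: algebra_simps)
  then have h: "norm (u - v) * norm (inv_elem v) \<le> 1/2"
    using norm_ge_zero[of "u - v"] by linarith
  show inv: "invertible_elem u"
    using invertible_elem_perturb(1)[OF v h] by simp
  have bound: "norm (inv_elem u) \<le> 2 * norm (inv_elem v)"
    using invertible_elem_perturb(2)[OF v h] by simp
  have "norm (inv_elem u - inv_elem v) = norm (inv_elem u * (v - u) * inv_elem v)"
    by (simp add: inv_elem_diff[OF inv v])
  also have "\<dots> \<le> norm (inv_elem u * (v - u)) * norm (inv_elem v)"
    by (rule norm_mult_ineq)
  also have "\<dots> \<le> norm (inv_elem u) * norm (v - u) * norm (inv_elem v)"
    by (intro mult_right_mono norm_mult_ineq norm_ge_zero)
  also have "\<dots> \<le> (2 * norm (inv_elem v)) * norm (v - u) * norm (inv_elem v)"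
    by (intro mult_right_mono bound) simp_all
  finally show "norm (inv_elem u - inv_elem v) \<le> 2 * norm (inv_elem v) ^ 2 * norm (u - v)"
    by (simp add: norm_minus_commute power2_eq_square algebra_simps)
qed

lemma tendsto_inv_elem:
  fixes g :: "'b \<Rightarrow> 'a::{real_normed_algebra_1,banach}"
  assumes g: "(g \<longlongrightarrow> v) F" and v: "invertible_elem v"
  shows "((\<lambda>z. inv_elem (g z)) \<longlongrightarrow> inv_elem v) F"
proof -
  have "1 / (2 * (norm (inv_elem v) + 1)) > 0" by (simp add: add_nonneg_pos)
  with g have near: "eventually (\<lambda>z. dist (g z) v < 1 / (2 * (norm (inv_elem v) + 1))) F"
    by (rule tendstoD)
  have "((\<lambda>z. g z - v) \<longlongrightarrow> 0) F" using g by (simp add: LIM_zero)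
  then have "((\<lambda>z. inv_elem (g z) - inv_elem v) \<longlongrightarrow> 0) F"
  proof (rule tendsto_0_le[where K = "2 * norm (inv_elem v) ^ 2"])
    show "eventually (\<lambda>z. norm (inv_elem (g z) - inv_elem v)
        \<le> norm (g z - v) * (2 * norm (inv_elem v) ^ 2)) F"
    proof (rule eventually_mono[OF near])
      fix z assume "dist (g z) v < 1 / (2 * (norm (inv_elem v) + 1))"
      from invertible_elem_near(2)[OF v this]
      show "norm (inv_elem (g z) - inv_elem v) \<le> norm (g z - v) * (2 * norm (inv_elem v) ^ 2)"
        by (simp add: mult.commute)
    qed
  qed
  then show ?thesis by (simp add: LIM_zero_iff)
qed

lemma continuous_on_inv_elem [continuous_intros]:
  fixes f :: "'b::topological_space \<Rightarrow> 'a::{real_normed_algebra_1,banach}"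
  assumes "continuous_on U f" "\<And>z. z \<in> U \<Longrightarrow> invertible_elem (f z)"
  shows "continuous_on U (\<lambda>z. inv_elem (f z))"
  using assms unfolding continuous_on_def by (auto intro: tendsto_inv_elem)

lemma open_invertible_elems: "open {u::'a::{real_normed_algebra_1,banach}. invertible_elem u}"
  unfolding open_contains_ball
proof (intro ballI)
  fix v :: 'a assume "v \<in> {u. invertible_elem u}"
  then have "ball v (1 / (2 * (norm (inv_elem v) + 1))) \<subseteq> {u. invertible_elem u}"
    using invertible_elem_near(1)[of v] by (simp add: subset_iff dist_commute)
  moreover have "1 / (2 * (norm (inv_elem v) + 1)) > 0" by (simp add: add_nonneg_pos)
  ultimately show "\<exists>e>0. ball v e \<subseteq> {u. invertible_elem u}" by blast
qed

text \<open>Invertibility is an open condition, and along the family it is also closed: it says that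
  the right inverse is a left inverse.\<close>

lemma invertible_elem_on_connected:
  fixes f g :: "'b::topological_space \<Rightarrow> 'a::{real_normed_algebra_1,banach}"
  assumes U: "connected U" and f: "continuous_on U f" and g: "continuous_on U g"
    and right_inverse: "\<And>z. z \<in> U \<Longrightarrow> f z * g z = 1"
    and z0: "z0 \<in> U" "invertible_elem (f z0)"
    and z: "z \<in> U"
  shows "invertible_elem (f z)"
proof -
  define S where "S = {z \<in> U. invertible_elem (f z)}"
  have "openin (top_of_set U) (U \<inter> f -` {u. invertible_elem u})"
    using f open_invertible_elems by (rule continuous_openin_preimage_gen)
  moreover have "U \<inter> f -` {u. invertible_elem u} = S" by (auto simp: S_def)
  ultimately have "openin (top_of_set U) S" by simp
  have "invertible_elem (f z) \<longleftrightarrow> g z * f z = 1" if "z \<in> U" for z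
  proof
    assume "invertible_elem (f z)"
    moreover from this have "g z = inv_elem (f z)"
      using inv_elem_unique_right right_inverse[OF that] by blast
    ultimately show "g z * f z = 1" by (simp add: left_inv_elem)
  next
    assume "g z * f z = 1"
    then show "invertible_elem (f z)" using invertible_elemI right_inverse[OF that] by blast
  qed
  then have "S = {z \<in> U. g z * f z = 1}" by (auto simp: S_def)
  then have "closedin (top_of_set U) S"
    by (simp add: continuous_closedin_preimage_constant continuous_on_mult f g)
  with \<open>openin (top_of_set U) S\<close> U have "S = {} \<or> S = U"
    unfolding connected_clopen by blast
  moreover have "z0 \<in> S" using z0 by (simp add: S_def)
  ultimately have "z \<in> S" using z by blast
  then show ?thesis by (simp add: S_def)
qed

lemma bounded_complement_far_point:
  fixes F :: "complex set"
  assumes "bounded F"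
  obtains z where "z \<in> - F" "R < cmod z"
proof -
  obtain B where B: "\<And>x. x \<in> F \<Longrightarrow> cmod x \<le> B" using assms by (auto simp: bounded_iff)
  define z where "z = complex_of_real (\<bar>max B R\<bar> + 1)"
  have "cmod z = \<bar>max B R\<bar> + 1" by (simp add: z_def)
  then have "z \<in> - F" "R < cmod z" using B by force+
  then show ?thesis by (rule that)
qed

lemma invertible_elem_resolvent_large:
  fixes c :: "'a::complex_banach_algebra_1"
  assumes "norm c < cmod z"
  shows "invertible_elem (scaleC z 1 - c)"
proof -
  have z: "z \<noteq> 0" using assms by auto
  then have "norm (scaleC (1 / z) c) < 1" using assms by (simp add: norm_scaleC norm_divide field_simps)
  then have "invertible_elem (scaleC z (1 - scaleC (1 / z) c))"
    by (intro invertible_elem_scaleC z invertible_elem_one_minus_small)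
  then show ?thesis using z by (simp add: scaleC_diff_right scaleC_scaleC scaleC_one)
qed

section \<open>Topologically nilpotent elements\<close>

text \<open>That is, \<open>\<parallel>u\<^sup>m\<parallel>\<^bsup>1/m\<^esup> \<longrightarrow> 0\<close>: the spectral radius of \<open>u\<close> is \<open>0\<close>.\<close>

definition topologically_nilpotent :: "'a::real_normed_algebra_1 \<Rightarrow> bool" where
  "topologically_nilpotent u \<longleftrightarrow> (\<forall>\<rho>>0. \<exists>C. \<forall>m. norm (u ^ m) \<le> C * \<rho> ^ m)"

lemma topologically_nilpotentD:
  "topologically_nilpotent u \<Longrightarrow> \<rho> > 0 \<Longrightarrow> \<exists>C. \<forall>m. norm (u ^ m) \<le> C * \<rho> ^ m"
  by (simp add: topologically_nilpotent_def)

text \<open>The leftover factors \<open>u ^ i\<close> with \<open>i < N\<close> only change the constant.\<close>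

lemma topologically_nilpotentI_power:
  fixes u :: "'a::real_normed_algebra_1"
  assumes "\<And>\<rho>. \<rho> > 0 \<Longrightarrow> \<exists>N>0. \<exists>C. \<forall>q. norm ((u ^ N) ^ q) \<le> C * (\<rho> ^ N) ^ q"
  shows "topologically_nilpotent u"
  unfolding topologically_nilpotent_def
proof (intro allI impI)
  fix \<rho> :: real assume \<rho>: "\<rho> > 0"
  then obtain N C where N: "N > 0" and C: "\<And>q. norm ((u ^ N) ^ q) \<le> C * (\<rho> ^ N) ^ q"
    using assms by blast
  have "C \<ge> 0" using C[of 0] by simp
  define B where "B = (\<Sum>i<N. (norm u / \<rho>) ^ i)"
  have "norm (u ^ m) \<le> (C * B) * \<rho> ^ m" for m
  proof -
    define q i where "q = m div N" and "i = m mod N"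
    have m: "m = N * q + i" and i: "i < N"
      using N by (simp_all add: q_def i_def)
    have "(norm u / \<rho>) ^ i \<le> B"
      unfolding B_def by (rule member_le_sum) (use i \<rho> in auto)
    then have "norm (u ^ i) \<le> B * \<rho> ^ i"
      using \<rho> norm_power_ineq[of u i] by (simp add: power_divide field_simps)
    have "norm (u ^ m) \<le> norm ((u ^ N) ^ q) * norm (u ^ i)"
      by (simp add: m power_add power_mult norm_mult_ineq)
    also have "\<dots> \<le> (C * (\<rho> ^ N) ^ q) * (B * \<rho> ^ i)"
      by (intro mult_mono C \<open>norm (u ^ i) \<le> B * \<rho> ^ i\<close>) (use \<open>C \<ge> 0\<close> \<rho> in auto)
    also have "\<dots> = (C * B) * \<rho> ^ m"
      by (simp add: m power_add power_mult)
    finally show ?thesis .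
  qed
  then show "\<exists>C. \<forall>m. norm (u ^ m) \<le> C * \<rho> ^ m" by blast
qed

lemma topologically_nilpotent_root:
  fixes u :: "'a::real_normed_algebra_1"
  assumes n: "n > 0" and tn: "topologically_nilpotent (u ^ n)"
  shows "topologically_nilpotent u"
proof (rule topologically_nilpotentI_power)
  fix \<rho> :: real assume "\<rho> > 0"
  then obtain C where "\<forall>q. norm ((u ^ n) ^ q) \<le> C * (\<rho> ^ n) ^ q"
    using topologically_nilpotentD[OF tn, of "\<rho> ^ n"] by auto
  then show "\<exists>N>0. \<exists>C. \<forall>q. norm ((u ^ N) ^ q) \<le> C * (\<rho> ^ N) ^ q"
    using n by blast
qed

lemma topologically_nilpotent_summable:
  fixes u :: "'a::{real_normed_algebra_1,banach}"
  assumes "topologically_nilpotent u" "\<And>m. \<bar>c m\<bar> \<le> 1"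
  shows "summable (\<lambda>m. norm (scaleR (c m) (u ^ m)))"
proof -
  obtain C where C: "\<And>m. norm (u ^ m) \<le> C * (1/2) ^ m"
    using topologically_nilpotentD[OF assms(1), of "1/2"] by auto
  have bound: "\<bar>c m\<bar> * norm (u ^ m) \<le> C * (1/2) ^ m" for m
    using mult_right_mono[OF assms(2)[of m] norm_ge_zero[of "u ^ m"]] C[of m] by simp
  show ?thesis
    by (rule summable_comparison_test'[of "\<lambda>m. C * (1/2) ^ m" 0]) (simp_all add: summable_geometric bound)
qed

lemma topologically_nilpotent_invertible_one_minus:
  fixes u :: "'a::{real_normed_algebra_1,banach}"
  assumes "topologically_nilpotent u"
  shows "invertible_elem (1 - u)"
proof -
  have "summable (\<lambda>m. norm (scaleR 1 (u ^ m)))"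
    by (rule topologically_nilpotent_summable[OF assms]) simp
  then have "summable (\<lambda>m. u ^ m)" by (simp add: summable_norm_cancel)
  then show ?thesis by (rule neumann_series)
qed

lemma topologically_nilpotent_mult_commute:
  fixes u :: "'a::real_normed_algebra_1"
  assumes u: "topologically_nilpotent u" and uv: "commute u v"
  shows "topologically_nilpotent (u * v)" "topologically_nilpotent (v * u)"
proof -
  show "topologically_nilpotent (u * v)"
    unfolding topologically_nilpotent_def
  proof (intro allI impI)
    fix \<rho> :: real assume "\<rho> > 0"
    define r where "r = \<rho> / (norm v + 1)"
    have "norm v + 1 > 0" by (simp add: add_nonneg_pos)
    then have "r > 0" using \<open>\<rho> > 0\<close> by (simp add: r_def)
    then obtain C where C: "\<And>m. norm (u ^ m) \<le> C * r ^ m"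
      using topologically_nilpotentD[OF u] by blast
    have "C \<ge> 0" using C[of 0] by simp
    have "norm ((u * v) ^ m) \<le> C * \<rho> ^ m" for m
    proof -
      have "norm (v ^ m) \<le> (norm v + 1) ^ m"
        by (rule order_trans[OF norm_power_ineq power_mono]) simp_all
      have "norm ((u * v) ^ m) \<le> norm (u ^ m) * norm (v ^ m)"
        by (simp add: power_mult_commute[OF uv] norm_mult_ineq)
      also have "\<dots> \<le> (C * r ^ m) * (norm v + 1) ^ m"
        using \<open>C \<ge> 0\<close> \<open>r > 0\<close> \<open>norm (v ^ m) \<le> (norm v + 1) ^ m\<close>
        by (intro mult_mono C) simp_all
      also have "\<dots> = C * (r * (norm v + 1)) ^ m"
        by (simp add: power_mult_distrib)
      also have "r * (norm v + 1) = \<rho>"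
        using \<open>norm v + 1 > 0\<close> by (simp add: r_def)
      finally show ?thesis .
    qed
    then show "\<exists>C. \<forall>m. norm ((u * v) ^ m) \<le> C * \<rho> ^ m" by blast
  qed
  then show "topologically_nilpotent (v * u)"
    using uv by (simp add: commute_def)
qed

lemma topologically_nilpotent_scaleR:
  fixes u :: "'a::real_normed_algebra_1"
  shows "topologically_nilpotent u \<Longrightarrow> topologically_nilpotent (scaleR r u)"
  using topologically_nilpotent_mult_commute(1)[of u "scaleR r 1"]
  by (simp add: commute_def)

lemma topologically_nilpotent_scaleC:
  fixes u :: "'a::complex_banach_algebra_1"
  shows "topologically_nilpotent u \<Longrightarrow> topologically_nilpotent (scaleC c u)"
  using topologically_nilpotent_mult_commute(1)[of u "scaleC c 1"] by simp

lemma topologically_nilpotent_add_orthogonal: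
  fixes u v :: "'a::real_normed_algebra_1"
  assumes u: "topologically_nilpotent u" and v: "topologically_nilpotent v"
    and orth: "u * v = 0" "v * u = 0"
  shows "topologically_nilpotent (u + v)"
  unfolding topologically_nilpotent_def
proof (intro allI impI)
  have power_add_orth: "(u + v) ^ Suc m = u ^ Suc m + v ^ Suc m" for m
  proof (induction m)
    case (Suc m)
    have "u * v ^ Suc m = 0" "v * u ^ Suc m = 0"
      using orth by (simp_all flip: mult.assoc)
    with Suc show ?case by (simp add: algebra_simps)
  qed simp
  fix \<rho> :: real assume "\<rho> > 0"
  then obtain C1 C2 where C1: "\<And>m. norm (u ^ m) \<le> C1 * \<rho> ^ m"
    and C2: "\<And>m. norm (v ^ m) \<le> C2 * \<rho> ^ m"
    using topologically_nilpotentD[OF u] topologically_nilpotentD[OF v] by metis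
  have "norm ((u + v) ^ m) \<le> (C1 + C2) * \<rho> ^ m" for m
  proof (cases m)
    case 0 then show ?thesis using C1[of 0] C2[of 0] by simp
  next
    case (Suc m')
    then show ?thesis
      using norm_triangle_ineq[of "u ^ m" "v ^ m"] C1[of m] C2[of m]
      by (simp add: power_add_orth algebra_simps del: power_Suc)
  qed
  then show "\<exists>C. \<forall>m. norm ((u + v) ^ m) \<le> C * \<rho> ^ m" by blast
qed

lemma topologically_nilpotent_not_invertible:
  fixes u :: "'a::real_normed_algebra_1"
  assumes u: "topologically_nilpotent u"
  shows "\<not> invertible_elem u"
proof
  assume inv: "invertible_elem u"
  then have "commute u (inv_elem u)"
    using right_inv_elem[of u] left_inv_elem[of u] by (simp add: commute_def)
  then have "topologically_nilpotent (u * inv_elem u)"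
    by (rule topologically_nilpotent_mult_commute(1)[OF u])
  then have "topologically_nilpotent (1::'a)"
    using right_inv_elem[OF inv] by simp
  then obtain C where "\<And>m. norm ((1::'a) ^ m) \<le> C * (1/2) ^ m"
    using topologically_nilpotentD[of 1 "1/2"] by auto
  then have "\<And>m. 1 \<le> C * (1/2::real) ^ m" by simp
  moreover have "(\<lambda>m. C * (1/2::real) ^ m) \<longlonglongrightarrow> 0"
    by (intro tendsto_mult_right_zero LIMSEQ_power_zero) simp
  ultimately have "1 \<le> (0::real)"
    by (intro LIMSEQ_le_const[of "\<lambda>m. C * (1/2) ^ m"]) auto
  then show False by simp
qed

lemma topologically_nilpotent_imp_quasinilpotent:
  fixes u :: "'a::complex_banach_algebra_1"
  assumes u: "topologically_nilpotent u"
  shows "quasinilpotent u"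
proof -
  have "invertible_elem (scaleC z 1 - u)" if "z \<noteq> 0" for z
  proof -
    have "invertible_elem (scaleC z (1 - scaleC (1 / z) u))"
      by (intro invertible_elem_scaleC that topologically_nilpotent_invertible_one_minus
          topologically_nilpotent_scaleC u)
    then show ?thesis using that by (simp add: scaleC_diff_right scaleC_scaleC scaleC_one)
  qed
  moreover have "\<not> invertible_elem (scaleC 0 1 - u)"
    using topologically_nilpotent_not_invertible[OF u] invertible_elem_minus by fastforce
  ultimately show ?thesis by (auto simp: quasinilpotent_def spectrum_def)
qed

section \<open>Quasinilpotent elements are topologically nilpotent\<close>

lemma norm_cis_minus_1: "cmod (cis t - 1) \<le> \<bar>t\<bar>"
proof -
  have "(cmod (cis t - 1))\<^sup>2 = (cos t - 1)\<^sup>2 + (sin t)\<^sup>2" by (simp add: cmod_power2)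
  also have "\<dots> = 2 - 2 * cos t"
    using sin_cos_squared_add[of t] by (simp add: power2_eq_square algebra_simps)
  also have "\<dots> = 4 * (sin (t/2))\<^sup>2"
    using cos_double_sin[of "t/2"] by simp
  also have "\<dots> \<le> 4 * (t/2)\<^sup>2"
  proof -
    have "(sin (t/2))\<^sup>2 \<le> (t/2)\<^sup>2"
      using abs_sin_x_le_abs_x[of "t/2"] abs_le_square_iff by blast
    then show ?thesis by simp
  qed
  finally have "(cmod (cis t - 1))\<^sup>2 \<le> t\<^sup>2" by (simp add: power2_eq_square)
  then show ?thesis by (metis abs_ge_zero power2_abs norm_ge_zero power2_le_imp_le)
qed

definition root_minus_one :: "nat \<Rightarrow> complex" where
  "root_minus_one j = cis (pi / 2 ^ j)"

lemma root_minus_one_power: "root_minus_one j ^ 2 ^ j = -1"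
  by (simp add: root_minus_one_def Complex.DeMoivre)

lemma norm_root_minus_one [simp]: "cmod (root_minus_one j) = 1"
  by (simp add: root_minus_one_def)

lemma norm_root_minus_one_minus_1: "cmod (root_minus_one j - 1) \<le> pi * (1/2) ^ j"
  using norm_cis_minus_1[of "pi / 2 ^ j"] by (simp add: root_minus_one_def power_one_over)

lemma scaleC_power_Suc_square:
  "scaleC (z ^ 2 ^ Suc j) (y ^ 2 ^ Suc j)
    = scaleC (z ^ 2 ^ j) (y ^ 2 ^ j) * scaleC (z ^ 2 ^ j) (y ^ 2 ^ j :: 'a::complex_banach_algebra_1)"
  by (simp add: scaleC_mult_scaleC mult_2 power_add)

lemma scaleC_power_rotate:
  "scaleC ((z * root_minus_one j) ^ 2 ^ j) (y ^ 2 ^ j)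
    = - scaleC (z ^ 2 ^ j) (y ^ 2 ^ j :: 'a::complex_banach_algebra_1)"
  by (simp add: power_mult_distrib root_minus_one_power scaleC_minus_left)

lemma inv_elem_one_minus_square:
  fixes u :: "'a::real_normed_algebra_1"
  assumes minus: "invertible_elem (1 - u)" and plus: "invertible_elem (1 + u)"
  shows "invertible_elem (1 - u * u)"
    and "inv_elem (1 - u * u) = inv_elem (1 - u) * inv_elem (1 + u)"
    and "inv_elem (1 - u * u) = scaleR (1/2) (inv_elem (1 - u) + inv_elem (1 + u))"
proof -
  have factor: "1 - u * u = (1 + u) * (1 - u)" by (simp add: algebra_simps)
  show inv: "invertible_elem (1 - u * u)"
    unfolding factor by (rule invertible_elem_mult[OF plus minus])
  have "(1 - u * u) * (inv_elem (1 - u) * inv_elem (1 + u)) = 1"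
    unfolding factor using right_inv_elem[OF minus] right_inv_elem[OF plus]
    by (simp add: mult.assoc) (simp flip: mult.assoc)
  then show product: "inv_elem (1 - u * u) = inv_elem (1 - u) * inv_elem (1 + u)"
    using inv_elem_unique_right[OF inv] by simp
  have "commute (1 - u) (inv_elem (1 + u))"
    by (rule commute_inv_elem[OF _ plus]) (simp add: commute_def algebra_simps)
  then have "inv_elem (1 - u) * inv_elem (1 + u) * (1 - u) = inv_elem (1 - u) * (1 - u) * inv_elem (1 + u)"
    by (simp add: commute_def mult.assoc)
  then have "inv_elem (1 - u) * inv_elem (1 + u) * (1 - u) = inv_elem (1 + u)"
    using left_inv_elem[OF minus] by simp
  moreover have "inv_elem (1 - u) * inv_elem (1 + u) * (1 + u) = inv_elem (1 - u)"
    using left_inv_elem[OF plus] by (simp add: mult.assoc)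
  moreover have "scaleR 2 (inv_elem (1 - u) * inv_elem (1 + u))
      = inv_elem (1 - u) * inv_elem (1 + u) * (1 + u) + inv_elem (1 - u) * inv_elem (1 + u) * (1 - u)"
    by (simp add: algebra_simps scaleR_2)
  ultimately have "inv_elem (1 - u) + inv_elem (1 + u) = scaleR 2 (inv_elem (1 - u) * inv_elem (1 + u))"
    by simp
  then show "inv_elem (1 - u * u) = scaleR (1/2) (inv_elem (1 - u) + inv_elem (1 + u))"
    by (simp add: product)
qed

lemma lipschitz_on_limit:
  assumes "\<And>j. L-lipschitz_on U (f j)" "\<And>z. z \<in> U \<Longrightarrow> (\<lambda>j. f j z) \<longlonglongrightarrow> g z"
  shows "L-lipschitz_on U g"
proof (rule lipschitz_onI[OF _ lipschitz_on_nonneg[OF assms(1)]])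
  fix z w assume "z \<in> U" "w \<in> U"
  then have "(\<lambda>j. dist (f j z) (f j w)) \<longlonglongrightarrow> dist (g z) (g w)"
    by (intro tendsto_dist assms(2))
  moreover have "dist (f j z) (f j w) \<le> L * dist z w" for j
    using lipschitz_onD[OF assms(1)] \<open>z \<in> U\<close> \<open>w \<in> U\<close> by blast
  ultimately show "dist (g z) (g w) \<le> L * dist z w"
    by (intro LIMSEQ_le_const2) auto
qed

lemma idempotent_norm_gap:
  fixes e :: "'a::real_normed_algebra_1"
  assumes "e * e = e"
  shows "norm e = 0 \<or> 1 \<le> norm e"
proof -
  have "norm e * 1 \<le> norm e * norm e" using norm_mult_ineq[of e e] assms by simp
  then show ?thesis by (cases "norm e = 0") (simp_all add: mult_le_cancel_left)
qed

text \<open>If \<open>1 - z x\<close> is invertible for every \<open>z\<close>, then so is \<open>1 - z\<^bsup>2\<^sup>j\<^esup> x\<^bsup>2\<^sup>j\<^esup>\<close>, and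
  its inverse \<open>R j z\<close> is the average of \<open>R 0\<close> over the \<open>2\<^sup>j\<close>-th roots of \<open>z\<^bsup>2\<^sup>j\<^esup>\<close>. Averaging keeps a Lipschitz bound, so \<open>R j\<close>
  converges to a Lipschitz family of idempotents; it is \<open>1\<close> at \<open>z = 0\<close>, hence by continuity
  \<open>1\<close> along the positive reals, which bounds \<open>\<parallel>x\<^bsup>2\<^sup>j\<^esup>\<parallel>\<close> by \<open>t\<^bsup>-2\<^sup>j\<^esup>\<close> for every \<open>t > 0\<close>.\<close>

locale entire_resolvent =
  fixes x :: "'a::complex_banach_algebra_1"
  assumes invertible_one_minus: "invertible_elem (1 - scaleC z x)"
begin

definition R :: "nat \<Rightarrow> complex \<Rightarrow> 'a" where
  "R j z = inv_elem (1 - scaleC (z ^ 2 ^ j) (x ^ 2 ^ j))"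

lemma invertible_dyadic: "invertible_elem (1 - scaleC (z ^ 2 ^ j) (x ^ 2 ^ j))"
proof (induction j arbitrary: z)
  case 0
  then show ?case using invertible_one_minus by simp
next
  case (Suc j)
  have "invertible_elem (1 + scaleC (z ^ 2 ^ j) (x ^ 2 ^ j))"
    using Suc.IH[of "z * root_minus_one j"] by (simp add: scaleC_power_rotate)
  with Suc.IH[of z] show ?case
    unfolding scaleC_power_Suc_square by (rule inv_elem_one_minus_square(1))
qed

lemma R_Suc:
  "R (Suc j) z = R j z * R j (z * root_minus_one j)"
  "R (Suc j) z = scaleR (1/2) (R j z + R j (z * root_minus_one j))"
proof -
  let ?u = "scaleC (z ^ 2 ^ j) (x ^ 2 ^ j)"
  have minus: "invertible_elem (1 - ?u)" by (rule invertible_dyadic)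
  have plus: "invertible_elem (1 + ?u)"
    using invertible_dyadic[of "z * root_minus_one j" j] by (simp add: scaleC_power_rotate)
  have "R (Suc j) z = inv_elem (1 - ?u * ?u)"
    unfolding R_def scaleC_power_Suc_square ..
  moreover have "R j z = inv_elem (1 - ?u)" "R j (z * root_minus_one j) = inv_elem (1 + ?u)"
    by (simp_all add: R_def scaleC_power_rotate)
  ultimately show "R (Suc j) z = R j z * R j (z * root_minus_one j)"
    "R (Suc j) z = scaleR (1/2) (R j z + R j (z * root_minus_one j))"
    using inv_elem_one_minus_square(2,3)[OF minus plus] by simp_all
qed

lemma R_at_0 [simp]: "R j 0 = 1"
  by (simp add: R_def power_0_left)

lemma lipschitz_on_R0: "\<exists>L. L-lipschitz_on (cball 0 r) (R 0)"
proof -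
  have "continuous_on (cball 0 r) (R 0)"
    unfolding R_def by (intro continuous_intros invertible_dyadic)
  then have "bounded (R 0 ` cball 0 r)"
    by (intro compact_imp_bounded compact_continuous_image compact_cball)
  then obtain M where M: "M > 0" "\<And>z. z \<in> cball 0 r \<Longrightarrow> norm (R 0 z) \<le> M"
    by (auto simp: bounded_pos)
  have resolvent_identity: "R 0 z - R 0 w = scaleC (z - w) (R 0 z * x * R 0 w)" for z w
  proof -
    have "R 0 z - R 0 w = R 0 z * ((1 - scaleC w x) - (1 - scaleC z x)) * R 0 w"
      using inv_elem_diff[OF invertible_dyadic[of z 0] invertible_dyadic[of w 0]] by (simp add: R_def)
    also have "(1 - scaleC w x) - (1 - scaleC z x) = scaleC (z - w) x"
      by (simp add: scaleC_diff_left)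
    finally show ?thesis by (simp add: mult_scaleC_left mult_scaleC_right)
  qed
  have "dist (R 0 z) (R 0 w) \<le> (M * norm x * M) * dist z w" if "z \<in> cball 0 r" "w \<in> cball 0 r" for z w
  proof -
    have "norm (R 0 z * x * R 0 w) \<le> M * norm x * M"
      using M that norm_mult_ineq[of "R 0 z * x" "R 0 w"] norm_mult_ineq[of "R 0 z" x]
      by (smt (verit) mult_mono mult_nonneg_nonneg norm_ge_zero)
    then show ?thesis
      by (simp add: dist_norm resolvent_identity norm_scaleC mult_left_mono mult.commute)
  qed
  then show ?thesis using M(1) by (intro exI lipschitz_onI) auto
qed

lemma lipschitz_on_R: obtains L where "\<And>j. L-lipschitz_on (cball 0 r) (R j)"
proof -
  obtain L where L: "L-lipschitz_on (cball 0 r) (R 0)" using lipschitz_on_R0 by blast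
  have "L-lipschitz_on (cball 0 r) (R j)" for j
  proof (induction j)
    case (Suc j)
    show ?case
    proof (rule lipschitz_onI)
      fix z w :: complex assume zw: "z \<in> cball 0 r" "w \<in> cball 0 r"
      let ?\<omega> = "root_minus_one j"
      have "R (Suc j) z - R (Suc j) w = scaleR (1/2) ((R j z - R j w) + (R j (z * ?\<omega>) - R j (w * ?\<omega>)))"
        by (simp add: R_Suc(2) algebra_simps)
      then have "dist (R (Suc j) z) (R (Suc j) w)
          \<le> (1/2) * (dist (R j z) (R j w) + dist (R j (z * ?\<omega>)) (R j (w * ?\<omega>)))"
        using norm_triangle_ineq[of "R j z - R j w" "R j (z * ?\<omega>) - R j (w * ?\<omega>)"]
        by (simp add: dist_norm)
      also have "\<dots> \<le> (1/2) * (L * dist z w + L * dist (z * ?\<omega>) (w * ?\<omega>))"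
        using zw lipschitz_onD[OF Suc.IH] by (intro mult_left_mono add_mono) (auto simp: norm_mult)
      also have "dist (z * ?\<omega>) (w * ?\<omega>) = dist z w"
        by (simp add: dist_norm norm_mult flip: left_diff_distrib)
      finally show "dist (R (Suc j) z) (R (Suc j) w) \<le> L * dist z w" by simp
    qed (rule lipschitz_on_nonneg[OF L])
  qed (rule L)
  then show ?thesis by (rule that)
qed

lemma R_rotate_close:
  assumes "L-lipschitz_on (cball 0 r) (R j)" "cmod z \<le> r"
  shows "norm (R j (z * root_minus_one j) - R j z) \<le> L * r * pi * (1/2) ^ j"
proof -
  have "norm (R j (z * root_minus_one j) - R j z) \<le> L * cmod (z * root_minus_one j - z)"
    using lipschitz_onD[OF assms(1), of "z * root_minus_one j" z] assms(2)
    by (simp add: dist_norm norm_mult)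
  also have "z * root_minus_one j - z = z * (root_minus_one j - 1)"
    by (simp add: algebra_simps)
  also have "cmod \<dots> = cmod z * cmod (root_minus_one j - 1)"
    by (rule norm_mult)
  also have "L * \<dots> \<le> L * (r * (pi * (1/2) ^ j))"
    using assms norm_root_minus_one_minus_1[of j] lipschitz_on_nonneg[OF assms(1)]
      order_trans[OF norm_ge_zero assms(2)]
    by (intro mult_left_mono mult_mono) auto
  finally show ?thesis by (simp add: mult.assoc)
qed

lemma R_rotate_tendsto_0: "(\<lambda>j. R j (z * root_minus_one j) - R j z) \<longlonglongrightarrow> 0"
proof -
  obtain L where L: "\<And>j. L-lipschitz_on (cball 0 (cmod z)) (R j)" using lipschitz_on_R by blast
  show ?thesis
  proof (rule Lim_null_comparison)
    show "\<forall>\<^sub>F j in sequentially. norm (R j (z * root_minus_one j) - R j z) \<le> L * cmod z * pi * (1/2) ^ j"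
      using R_rotate_close[OF L] by simp
    show "(\<lambda>j. L * cmod z * pi * (1/2::real) ^ j) \<longlonglongrightarrow> 0"
      by (intro tendsto_mult_right_zero LIMSEQ_power_zero) simp
  qed
qed

lemma R_convergent: "convergent (\<lambda>j. R j z)"
proof -
  obtain L where L: "\<And>j. L-lipschitz_on (cball 0 (cmod z)) (R j)" using lipschitz_on_R by blast
  have bound: "norm (R (Suc j) z - R j z) \<le> (L * cmod z * pi) * (1/2) ^ j" for j
  proof -
    have "R (Suc j) z - R j z = scaleR (1/2) (R j (z * root_minus_one j) - R j z)"
      by (simp add: R_Suc(2) algebra_simps flip: scaleR_2)
    then have "norm (R (Suc j) z - R j z) = 1/2 * norm (R j (z * root_minus_one j) - R j z)"
      by simp
    then show ?thesis
      using R_rotate_close[OF L[of j], of z] norm_ge_zero[of "R j (z * root_minus_one j) - R j z"]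
      by linarith
  qed
  have "summable (\<lambda>j. norm (R (Suc j) z - R j z))"
    by (rule summable_comparison_test'[of "\<lambda>j. (L * cmod z * pi) * (1/2) ^ j" 0])
      (simp_all add: summable_geometric bound)
  then have "convergent (\<lambda>n. \<Sum>j<n. R (Suc j) z - R j z)"
    by (simp add: summable_norm_cancel flip: summable_iff_convergent)
  then have "convergent (\<lambda>n. R n z - R 0 z)"
    using sum_lessThan_telescope[of "\<lambda>j. R j z"] by simp
  then show ?thesis
    by (simp only: convergent_diff_const_right_iff)
qed

definition R_lim :: "complex \<Rightarrow> 'a" where
  "R_lim z = lim (\<lambda>j. R j z)"

lemma R_tendsto_R_lim: "(\<lambda>j. R j z) \<longlonglongrightarrow> R_lim z"
  unfolding R_lim_def using R_convergent by (simp add: convergent_LIMSEQ_iff)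

lemma R_lim_idempotent: "R_lim z * R_lim z = R_lim z"
proof -
  have "(\<lambda>j. (R j (z * root_minus_one j) - R j z) + R j z) \<longlonglongrightarrow> 0 + R_lim z"
    by (intro tendsto_add R_rotate_tendsto_0 R_tendsto_R_lim)
  then have "(\<lambda>j. R j z * R j (z * root_minus_one j)) \<longlonglongrightarrow> R_lim z * R_lim z"
    by (intro tendsto_mult R_tendsto_R_lim) simp
  then have "(\<lambda>j. R (Suc j) z) \<longlonglongrightarrow> R_lim z * R_lim z"
    by (simp add: R_Suc(1))
  moreover have "(\<lambda>j. R (Suc j) z) \<longlonglongrightarrow> R_lim z"
    by (rule LIMSEQ_Suc[OF R_tendsto_R_lim])
  ultimately show ?thesis by (rule LIMSEQ_unique)
qed

lemma R_lim_at_0: "R_lim 0 = 1"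
  using R_tendsto_R_lim[of 0] by (simp add: LIMSEQ_const_iff)

lemma continuous_on_R_lim: "continuous_on (cball 0 r) R_lim"
proof -
  obtain L where "\<And>j. L-lipschitz_on (cball 0 r) (R j)" using lipschitz_on_R by blast
  then have "L-lipschitz_on (cball 0 r) R_lim"
    by (rule lipschitz_on_limit) (rule R_tendsto_R_lim)
  then show ?thesis by (rule lipschitz_on_continuous_on)
qed

text \<open>A continuous path of idempotents starting at \<open>1\<close> stays at \<open>1\<close>, since the norm of
  \<open>1 - R_lim\<close> cannot cross the gap between \<open>0\<close> and \<open>1\<close>.\<close>

lemma R_lim_of_real: "t \<ge> 0 \<Longrightarrow> R_lim (of_real t) = 1"
proof (rule ccontr)
  assume "t \<ge> 0" "R_lim (of_real t) \<noteq> 1"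
  define g where "g s = norm (1 - R_lim (of_real s))" for s
  have gap: "g s = 0 \<or> 1 \<le> g s" for s
    unfolding g_def using R_lim_idempotent[of "of_real s"]
    by (intro idempotent_norm_gap) (simp add: algebra_simps)
  have "continuous_on {0..t} (\<lambda>s. R_lim (of_real s))"
    by (rule continuous_on_compose2[OF continuous_on_R_lim[of t]]) (auto intro!: continuous_intros)
  then have "continuous_on {0..t} g"
    unfolding g_def by (intro continuous_intros)
  moreover have "g 0 \<le> 1/2" "1/2 \<le> g t"
    using gap[of t] \<open>R_lim (of_real t) \<noteq> 1\<close> by (auto simp: g_def R_lim_at_0)
  ultimately obtain s where "g s = 1/2"
    using IVT'[of g 0 "1/2" t] \<open>t \<ge> 0\<close> by auto
  then show False using gap[of s] by simp
qed

lemma topologically_nilpotent_elem: "topologically_nilpotent x"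
proof (rule topologically_nilpotentI_power)
  fix \<rho> :: real assume "\<rho> > 0"
  define t where "t = 1 / \<rho>"
  have "t > 0" using \<open>\<rho> > 0\<close> by (simp add: t_def)
  have "(\<lambda>j. R j (of_real t)) \<longlonglongrightarrow> 1"
    using R_tendsto_R_lim[of "of_real t"] R_lim_of_real[of t] \<open>t > 0\<close> by simp
  then obtain j where j: "dist (R j (of_real t)) 1 < 1/2"
    using tendstoD[of _ 1 sequentially "1/2"] by (auto simp: eventually_sequentially)
  define u where "u = scaleC (of_real t ^ 2 ^ j) (x ^ 2 ^ j)"
  have "R j (of_real t) * (1 - u) = 1"
    unfolding R_def u_def by (rule left_inv_elem[OF invertible_dyadic])
  then have "u = (R j (of_real t) - 1) * (1 - u)"
    by (simp add: algebra_simps)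
  then have "norm u \<le> norm (R j (of_real t) - 1) * norm (1 - u)"
    by (metis norm_mult_ineq)
  also have "\<dots> \<le> 1/2 * (1 + norm u)"
    using j norm_triangle_ineq4[of 1 u] by (intro mult_mono) (simp_all add: dist_norm)
  finally have "norm u \<le> 1" by simp
  moreover have "norm u = t ^ 2 ^ j * norm (x ^ 2 ^ j)"
    using \<open>t > 0\<close> by (simp add: u_def norm_scaleC norm_power)
  ultimately have "norm (x ^ 2 ^ j) \<le> \<rho> ^ 2 ^ j"
    using \<open>\<rho> > 0\<close> by (simp add: t_def power_one_over field_simps)
  then have "norm ((x ^ 2 ^ j) ^ q) \<le> 1 * (\<rho> ^ 2 ^ j) ^ q" for q
    by (simp add: order_trans[OF norm_power_ineq] power_mono)
  moreover have "(0::nat) < 2 ^ j" by simp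
  ultimately show "\<exists>N>0. \<exists>C. \<forall>q. norm ((x ^ N) ^ q) \<le> C * (\<rho> ^ N) ^ q"
    by blast
qed

end

lemma topologically_nilpotentI_resolvent:
  fixes x :: "'a::complex_banach_algebra_1"
  assumes "\<And>\<mu>. \<mu> \<noteq> 0 \<Longrightarrow> invertible_elem (scaleC \<mu> 1 - x)"
  shows "topologically_nilpotent x"
proof -
  have "invertible_elem (1 - scaleC z x)" for z
  proof (cases "z = 0")
    case False
    then have "1 - scaleC z x = scaleC z (scaleC (1 / z) 1 - x)"
      by (simp add: scaleC_diff_right scaleC_scaleC scaleC_one)
    then show ?thesis
      using invertible_elem_scaleC[OF False assms[of "1 / z"]] False by simp
  qed simp
  then interpret entire_resolvent x by unfold_locales
  show ?thesis by (rule topologically_nilpotent_elem)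
qed

section \<open>Polynomials in an element\<close>

definition peval :: "complex poly \<Rightarrow> 'a::complex_banach_algebra_1 \<Rightarrow> 'a" where
  "peval p a = (\<Sum>i\<le>degree p. scaleC (coeff p i) (a ^ i))"

lemma peval_eq_sum: "degree p \<le> N \<Longrightarrow> peval p a = (\<Sum>i\<le>N. scaleC (coeff p i) (a ^ i))"
  unfolding peval_def by (rule sum.mono_neutral_left) (auto simp: coeff_eq_0)

lemma peval_0 [simp]: "peval 0 a = 0"
  by (simp add: peval_def)

lemma peval_add: "peval (p + q) a = peval p a + peval q a"
proof -
  let ?N = "max (degree p) (degree q)"
  have "degree (p + q) \<le> ?N" by (simp add: degree_add_le)
  then show ?thesis
    by (simp add: peval_eq_sum[of _ ?N] scaleC_add_left sum.distrib)
qed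

lemma peval_diff: "peval (p - q) a = peval p a - peval q a"
proof -
  let ?N = "max (degree p) (degree q)"
  have "degree (p - q) \<le> ?N" by (simp add: degree_diff_le)
  then show ?thesis
    by (simp add: peval_eq_sum[of _ ?N] scaleC_diff_left sum_subtractf)
qed

lemma peval_smult: "peval (smult c p) a = scaleC c (peval p a)"
  using degree_smult_le[of c p]
  by (simp add: peval_eq_sum[of _ "degree p"] peval_def scaleC_scaleC scaleC_sum_right)

lemma peval_pCons: "peval (pCons c p) a = scaleC c 1 + a * peval p a"
proof -
  have "peval (pCons c p) a = (\<Sum>i\<le>Suc (degree p). scaleC (coeff (pCons c p) i) (a ^ i))"
    by (rule peval_eq_sum) (rule degree_pCons_le)
  also have "\<dots> = scaleC c 1 + (\<Sum>i\<le>degree p. scaleC (coeff p i) (a ^ Suc i))"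
    by (subst sum.atMost_Suc_shift) simp
  also have "(\<Sum>i\<le>degree p. scaleC (coeff p i) (a ^ Suc i)) = a * peval p a"
    by (simp add: peval_def sum_distrib_left mult_scaleC_right)
  finally show ?thesis .
qed

lemma peval_linear_factor: "peval ([:- \<mu>, 1:] * p) a = (a - scaleC \<mu> 1) * peval p a"
  by (simp add: peval_diff peval_pCons peval_smult algebra_simps)

lemma peval_monom: "peval (monom c n) a = scaleC c (a ^ n)"
  by (simp add: peval_eq_sum[OF degree_monom_le] if_distrib[of "\<lambda>c. scaleC c _"] cong: if_cong)

lemma peval_in_bicommutant: "peval p a \<in> bicommutant a"
  unfolding peval_def by (intro bicommutant_intros)

lemma peval_factor:
  obtains h where "scaleC (poly p \<mu>) 1 - peval p a = (scaleC \<mu> 1 - a) * peval h a"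
proof -
  have "[:- \<mu>, 1:] dvd p - [:poly p \<mu>:]"
    by (simp add: poly_eq_0_iff_dvd[symmetric])
  then obtain h where h: "p - [:poly p \<mu>:] = [:- \<mu>, 1:] * h" by (rule dvdE)
  have "peval (p - [:poly p \<mu>:]) a = (a - scaleC \<mu> 1) * peval h a"
    unfolding h by (rule peval_linear_factor)
  then have "peval p a - scaleC (poly p \<mu>) 1 = (a - scaleC \<mu> 1) * peval h a"
    by (simp add: peval_diff peval_pCons)
  then have "scaleC (poly p \<mu>) 1 - peval p a = (scaleC \<mu> 1 - a) * peval h a"
    by (simp add: algebra_simps)
  then show ?thesis by (rule that)
qed

lemma invertible_peval:
  fixes a :: "'a::complex_banach_algebra_1"
  assumes "p \<noteq> 0" "\<And>\<mu>. poly p \<mu> = 0 \<Longrightarrow> \<mu> \<notin> spectrum a"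
  shows "invertible_elem (peval p a)"
  using assms
proof (induction "degree p" arbitrary: p)
  case 0
  then obtain c where "p = [:c:]" "c \<noteq> 0" by (metis degree_eq_zeroE pCons_0_0)
  then show ?case by (simp add: peval_pCons invertible_elem_scaleC)
next
  case (Suc d)
  then obtain \<mu> where "poly p \<mu> = 0"
    using fundamental_theorem_of_algebra constant_degree by (metis nat.distinct(1))
  then obtain r where r: "p = [:- \<mu>, 1:] * r" by (meson dvdE poly_eq_0_iff_dvd)
  with Suc.prems have "r \<noteq> 0" by auto
  then have "degree p = degree [:- \<mu>, 1:] + degree r"
    unfolding r by (intro degree_mult_eq) simp_all
  with Suc.hyps(2) have "d = degree r" by simp
  moreover have "\<nu> \<notin> spectrum a" if "poly r \<nu> = 0" for \<nu>
    using Suc.prems(2)[of \<nu>] that r by simp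
  ultimately have "invertible_elem (peval r a)"
    using Suc.hyps(1) \<open>r \<noteq> 0\<close> by blast
  moreover have "invertible_elem (scaleC \<mu> 1 - a)"
    using Suc.prems(2) \<open>poly p \<mu> = 0\<close> by (simp add: spectrum_def)
  then have "invertible_elem (a - scaleC \<mu> 1)"
    using invertible_elem_minus by fastforce
  ultimately show ?case
    unfolding r peval_linear_factor by (intro invertible_elem_mult)
qed

section \<open>Square roots and idempotent lifting\<close>

lemma abs_gbinomial_half_le_1: "\<bar>(1/2::real) gchoose m\<bar> \<le> 1"
proof (induction m)
  case (Suc m)
  have "of_nat (Suc m) * ((1/2::real) gchoose Suc m) = (1/2 - of_nat m) * ((1/2) gchoose m)"
    using gbinomial_mult_1[of "1/2::real" m] by (simp add: algebra_simps)
  then have "real (Suc m) * \<bar>(1/2::real) gchoose Suc m\<bar> = \<bar>1/2 - real m\<bar> * \<bar>(1/2) gchoose m\<bar>"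
    by (metis abs_mult abs_of_nat)
  also have "\<dots> \<le> real (Suc m) * 1"
    by (rule mult_mono) (use Suc.IH in auto)
  finally show ?case by (simp only: mult_le_cancel_left)
qed simp

text \<open>The binomial series \<open>(1 - t)\<^bsup>1/2\<^esup> = (\<Sum>m. sqrt_coeff m * t\<^sup>m)\<close>.\<close>

definition sqrt_coeff :: "nat \<Rightarrow> real" where
  "sqrt_coeff m = ((1/2) gchoose m) * (-1) ^ m"

lemma abs_sqrt_coeff_le_1: "\<bar>sqrt_coeff m\<bar> \<le> 1"
  using abs_gbinomial_half_le_1[of m] by (simp add: sqrt_coeff_def abs_mult power_abs)

lemma sqrt_coeff_convolution:
  "(\<Sum>i\<le>k. sqrt_coeff i * sqrt_coeff (k - i)) = (-1) ^ k * of_nat (1 choose k)"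
proof -
  have "sqrt_coeff i * sqrt_coeff (k - i) = (-1) ^ k * (((1/2) gchoose i) * ((1/2) gchoose (k - i)))"
    if "i \<le> k" for i
    using that by (simp add: sqrt_coeff_def power_add[symmetric] algebra_simps)
  then have "(\<Sum>i\<le>k. sqrt_coeff i * sqrt_coeff (k - i))
      = (-1) ^ k * (\<Sum>i\<le>k. ((1/2::real) gchoose i) * ((1/2) gchoose (k - i)))"
    by (simp add: sum_distrib_left)
  also have "(\<Sum>i\<le>k. ((1/2::real) gchoose i) * ((1/2) gchoose (k - i))) = of_nat (1 choose k)"
    using gbinomial_Vandermonde[of "1/2::real" "1/2" k] binomial_gbinomial[of 1 k, where 'a = real]
    by (simp add: atLeast0AtMost)
  finally show ?thesis .
qed

lemma sqrt_series_square:
  fixes u :: "'a::{real_normed_algebra_1,banach}"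
  assumes u: "topologically_nilpotent u"
  shows "(\<Sum>m. scaleR (sqrt_coeff m) (u ^ m)) * (\<Sum>m. scaleR (sqrt_coeff m) (u ^ m)) = 1 - u"
proof -
  define T where "T m = scaleR (sqrt_coeff m) (u ^ m)" for m
  have norm_T: "summable (\<lambda>m. norm (T m))"
    unfolding T_def by (rule topologically_nilpotent_summable[OF u abs_sqrt_coeff_le_1])
  have "(\<lambda>k. \<Sum>i\<le>k. T i * T (k - i)) sums (suminf T * suminf T)"
    by (rule Cauchy_product_sums[OF norm_T norm_T])
  moreover have "(\<Sum>i\<le>k. T i * T (k - i)) = scaleR ((-1) ^ k * of_nat (1 choose k)) (u ^ k)" for k
  proof -
    have "T i * T (k - i) = scaleR (sqrt_coeff i * sqrt_coeff (k - i)) (u ^ k)" if "i \<le> k" for i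
      using that by (simp add: T_def power_add[symmetric])
    then show ?thesis
      by (simp add: scaleR_sum_left[symmetric] sqrt_coeff_convolution)
  qed
  moreover have "(\<lambda>k. scaleR ((-1) ^ k * of_nat (1 choose k)) (u ^ k)) sums (1 - u)"
  proof -
    have "(\<lambda>k. scaleR ((-1) ^ k * of_nat (1 choose k)) (u ^ k)) sums
        (\<Sum>k\<in>{0, 1}. scaleR ((-1) ^ k * of_nat (1 choose k)) (u ^ k))"
      by (rule sums_finite) (auto simp: binomial_eq_0)
    then show ?thesis by simp
  qed
  ultimately have "suminf T * suminf T = 1 - u" by (simp add: sums_unique2)
  then show ?thesis by (simp add: T_def[abs_def])
qed

lemma sqrt_one_minus_topologically_nilpotent:
  fixes u :: "'a::{real_normed_algebra_1,banach}"
  assumes u: "topologically_nilpotent u"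
  obtains r s where "r * r = 1 - u" "r = 1 - u * s" "r \<in> bicommutant u" "s \<in> bicommutant u"
proof -
  define r where "r = (\<Sum>m. scaleR (sqrt_coeff m) (u ^ m))"
  define X where "X = (\<Sum>m. scaleR (sqrt_coeff (Suc m)) (u ^ m))"
  have summable: "summable (\<lambda>m. scaleR (sqrt_coeff m) (u ^ m))"
    "summable (\<lambda>m. scaleR (sqrt_coeff (Suc m)) (u ^ m))"
    using topologically_nilpotent_summable[OF u abs_sqrt_coeff_le_1]
      topologically_nilpotent_summable[OF u abs_sqrt_coeff_le_1[of "Suc _"]]
    by (simp_all add: summable_norm_cancel)
  have "r - scaleR (sqrt_coeff 0) (u ^ 0) = (\<Sum>m. scaleR (sqrt_coeff (Suc m)) (u ^ Suc m))"
    unfolding r_def by (rule suminf_split_head[OF summable(1), symmetric])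
  also have "\<dots> = u * X"
    using suminf_mult[OF summable(2), of u] by (simp add: X_def mult_scaleR_right)
  finally have "r = 1 - u * (- X)"
    by (simp add: sqrt_coeff_def diff_eq_eq add.commute)
  moreover have "r * r = 1 - u"
    unfolding r_def by (rule sqrt_series_square[OF u])
  moreover have "r \<in> bicommutant u"
    unfolding r_def by (rule bicommutant_suminf[OF summable(1)]) (intro bicommutant_intros)
  moreover have "X \<in> bicommutant u"
    unfolding X_def by (rule bicommutant_suminf[OF summable(2)]) (intro bicommutant_intros)
  then have "- X \<in> bicommutant u"
    using bicommutant_diff[OF bicommutant_zero] by fastforce
  ultimately show ?thesis using that by blast
qed

lemma involution_of_square_root:
  fixes b r :: "'a::ring_1"
  assumes b: "invertible_elem b" and rr: "r * r = b * b" and rb: "commute (inv_elem b) r"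
  shows "(r * inv_elem b) * (r * inv_elem b) = 1"
    and "b - r * inv_elem b = (b * b - r) * inv_elem b"
proof -
  have "(r * inv_elem b) * (r * inv_elem b) = (r * r) * (inv_elem b * inv_elem b)"
    using rb by (simp add: commute_def mult.assoc) (simp flip: mult.assoc)
  also have "\<dots> = b * (b * inv_elem b) * inv_elem b"
    by (simp add: rr mult.assoc)
  finally show "(r * inv_elem b) * (r * inv_elem b) = 1"
    using right_inv_elem[OF b] by simp
  show "b - r * inv_elem b = (b * b - r) * inv_elem b"
    using right_inv_elem[OF b] by (simp add: left_diff_distrib mult.assoc)
qed

text \<open>Lifting to an idempotent: \<open>w = r (2e - 1)\<^sup>-\<^sup>1\<close> is an involution, where \<open>r\<close> is the square root of
  \<open>1 - 4 (e - e\<^sup>2) = (2e - 1)\<^sup>2\<close> given by the binomial series.\<close>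

lemma idempotent_lifting:
  fixes e :: "'a::{real_normed_algebra_1,banach}"
  assumes tn: "topologically_nilpotent (e - e * e)"
  obtains p where "p * p = p" "p \<in> bicommutant e" "topologically_nilpotent (e - p)"
proof -
  define d where "d = e - e * e"
  have d: "d \<in> bicommutant e" unfolding d_def by (intro bicommutant_intros)
  have "topologically_nilpotent (scaleR 4 d)"
    using tn by (simp add: d_def topologically_nilpotent_scaleR)
  then obtain r s where rr: "r * r = 1 - scaleR 4 d" and r: "r = 1 - scaleR 4 d * s"
    and bic_rs: "r \<in> bicommutant (scaleR 4 d)" "s \<in> bicommutant (scaleR 4 d)"
    by (rule sqrt_one_minus_topologically_nilpotent)
  have "scaleR 4 d \<in> bicommutant e" by (intro bicommutant_intros d)
  with bic_rs have rs: "r \<in> bicommutant e" "s \<in> bicommutant e"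
    by (auto intro: bicommutant_trans)
  define b where "b = scaleR 2 e - 1"
  have b: "b \<in> bicommutant e" unfolding b_def by (intro bicommutant_intros)
  have bb: "b * b = 1 - scaleR 4 d"
    unfolding b_def d_def by (simp add: algebra_simps) (simp flip: scaleR_add_left)
  have "invertible_elem (1 - scaleR 4 d)"
    by (rule topologically_nilpotent_invertible_one_minus) fact
  then have inv_b: "invertible_elem b"
    by (rule invertible_elem_of_square[of b, unfolded bb])
  define B where "B = inv_elem b"
  have B: "B \<in> bicommutant e" unfolding B_def by (intro bicommutant_inv_elem b inv_b)
  define w where "w = r * B"
  have ww: "w * w = 1" and bw: "b - w = (b * b - r) * B"
    using involution_of_square_root[OF inv_b _ bicommutant_commute[OF B rs(1), unfolded B_def]] rr bb
    by (simp_all add: w_def B_def)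
  define p where "p = scaleR (1/2) (1 + w)"
  have pp: "p * p = p"
    unfolding p_def using ww by (simp add: algebra_simps scaleR_2) (simp flip: scaleR_add_left)
  have p: "p \<in> bicommutant e"
    unfolding p_def w_def by (intro bicommutant_intros rs B)
  have split: "e - p = d * scaleR 2 ((s - 1) * B)"
  proof -
    have "b * b - r = scaleR 4 (d * (s - 1))"
      by (simp add: bb r algebra_simps)
    with bw have "b - w = scaleR 4 (d * (s - 1) * B)"
      by (simp add: mult.assoc)
    moreover have "e - p = scaleR (1/2) (b - w)"
      unfolding p_def b_def by (simp add: algebra_simps)
    ultimately show ?thesis by (simp add: mult.assoc)
  qed
  have "commute d (scaleR 2 ((s - 1) * B))"
    by (intro bicommutant_commute[of _ e] bicommutant_intros d rs B)
  then have "topologically_nilpotent (e - p)"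
    unfolding split by (rule topologically_nilpotent_mult_commute(1)[OF tn[folded d_def]])
  with pp p show ?thesis by (rule that)
qed

section \<open>g\<pi>-Hirano invertibility and the spectrum\<close>

lemma idempotent_power:
  fixes p :: "'a::monoid_mult"
  assumes "p * p = p" "n > 0"
  shows "p ^ n = p"
  using assms(2)
proof (induction n)
  case (Suc n)
  then show ?case using assms(1) by (cases n) simp_all
qed simp

lemma corner_right_inverse:
  fixes c y p :: "'a::complex_banach_algebra_1"
  assumes yp: "commute y p" and inv: "invertible_elem (scaleC \<mu> 1 - y)"
    and c: "c * p = (scaleC \<mu> 1 - y) * p"
  shows "c * (inv_elem (scaleC \<mu> 1 - y) * p) = p"
proof -
  have "commute p (scaleC \<mu> 1 - y)"
    using yp by (simp add: commute_def algebra_simps)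
  then have "commute p (inv_elem (scaleC \<mu> 1 - y))"
    by (rule commute_inv_elem[OF _ inv])
  then have "c * (inv_elem (scaleC \<mu> 1 - y) * p) = c * p * inv_elem (scaleC \<mu> 1 - y)"
    by (simp add: commute_def mult.assoc)
  also have "\<dots> = p * (scaleC \<mu> 1 - y) * inv_elem (scaleC \<mu> 1 - y)"
    using \<open>commute p (scaleC \<mu> 1 - y)\<close> by (simp add: c commute_def)
  also have "\<dots> = p"
    using right_inv_elem[OF inv] by (simp add: mult.assoc)
  finally show ?thesis .
qed

text \<open>An idempotent \<open>p\<close> commuting with \<open>a\<close> and \<open>y\<close> splits the resolvent: \<open>y\<close> agrees with \<open>a\<close> on
  \<open>1 - p\<close> and with \<open>q(a)\<close> on \<open>p\<close>, and \<open>q(l) - q(a)\<close> is a multiple of \<open>l - a\<close>.\<close>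

lemma invertible_elem_resolvent_corners:
  fixes a y p :: "'a::complex_banach_algebra_1"
  assumes pp: "p * p = p" and ap: "commute a p" and ay: "commute a y" and yp: "commute y p"
    and off: "y * (1 - p) = a * (1 - p)" and on: "y * p = peval q a * p"
    and inv_l: "invertible_elem (scaleC l 1 - y)"
    and inv_q: "invertible_elem (scaleC (poly q l) 1 - y)"
  shows "invertible_elem (scaleC l 1 - a)"
proof -
  obtain h where h: "scaleC (poly q l) 1 - peval q a = (scaleC l 1 - a) * peval h a"
    by (rule peval_factor)
  define V where "V = inv_elem (scaleC l 1 - y)"
  define W where "W = inv_elem (scaleC (poly q l) 1 - y)"
  have "commute y (1 - p)" using yp by (simp add: commute_def algebra_simps)
  moreover have "(scaleC l 1 - a) * (1 - p) = (scaleC l 1 - y) * (1 - p)"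
    using off by (simp add: left_diff_distrib)
  ultimately have off_inverse: "(scaleC l 1 - a) * (V * (1 - p)) = 1 - p"
    unfolding V_def by (rule corner_right_inverse[OF _ inv_l])
  have "(scaleC (poly q l) 1 - peval q a) * p = (scaleC (poly q l) 1 - y) * p"
    using on by (simp add: left_diff_distrib)
  then have "(scaleC (poly q l) 1 - peval q a) * (W * p) = p"
    unfolding W_def by (rule corner_right_inverse[OF yp inv_q])
  then have on_inverse: "(scaleC l 1 - a) * (peval h a * (W * p)) = p"
    by (simp add: h mult.assoc)
  define Z where "Z = V * (1 - p) + peval h a * (W * p)"
  have "(scaleC l 1 - a) * Z = 1"
    by (simp add: Z_def distrib_left off_inverse on_inverse)
  moreover have "commute a Z"
  proof -
    have "commute a V" "commute a W"
      unfolding V_def W_def using ay by (auto intro!: commute_inv_elem inv_l inv_q commute_diff)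
    moreover have "commute a (peval h a)"
      by (rule bicommutant_commute_base[OF peval_in_bicommutant])
    ultimately show ?thesis
      unfolding Z_def using ap by (intro commute_add commute_mult commute_diff) simp_all
  qed
  then have "commute (scaleC l 1 - a) Z"
    by (intro commute_sym[OF commute_diff]) (simp_all add: commute_sym[of a Z])
  ultimately show ?thesis by (intro invertible_elem_commute_right_inverse)
qed

lemma gpi_Hirano_invertible_spectrum:
  fixes a :: "'a::complex_banach_algebra_1"
  assumes "gpi_Hirano_invertible a"
  shows "\<exists>n>0. spectrum a \<subseteq> insert 0 {z. z ^ n = 1}"
proof -
  obtain x n where xax: "x * a * x = x" and ax: "a * x = x * a" and "n > 0"
    and qn: "quasinilpotent (a - a ^ (n + 2) * x)"
    using assms unfolding gpi_Hirano_invertible_def by blast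
  define y where "y = a - a ^ (n + 2) * x"
  define p where "p = a * x"
  define q :: "complex poly" where "q = [:0, 1:] - monom 1 (n + 1)"
  have "commute a x" using ax by (simp add: commute_def)
  have xp: "x * p = x" using xax by (simp add: p_def flip: mult.assoc)
  have pp: "p * p = p" using xp by (simp add: p_def mult.assoc)
  have ap: "commute a p" using \<open>commute a x\<close> by (simp add: p_def commute_mult)
  have ay: "commute a y"
    using \<open>commute a x\<close> by (simp add: y_def commute_diff commute_mult commute_power)
  have "commute x a" using ax by (simp add: commute_def)
  then have "commute x y"
    unfolding y_def by (intro commute_diff commute_mult commute_power commute_refl)
  then have yp: "commute y p"
    unfolding p_def by (intro commute_mult commute_sym[OF ay] commute_sym[OF \<open>commute x y\<close>])
  have "a ^ (n + 2) = a ^ (n + 1) * a" using power_Suc2[of a "n + 1"] by simp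
  then have "a ^ (n + 2) * x = a ^ (n + 1) * p"
    by (simp add: p_def mult.assoc)
  then have y: "y = a - a ^ (n + 1) * p"
    by (simp add: y_def)
  have "p * (1 - p) = 0" using pp by (simp add: algebra_simps)
  moreover have "y * (1 - p) = a * (1 - p) - a ^ (n + 1) * (p * (1 - p))"
    by (simp add: y left_diff_distrib mult.assoc)
  ultimately have "y * (1 - p) = a * (1 - p)" by simp
  moreover have "y * p = peval q a * p"
    using pp by (simp add: y q_def peval_diff peval_pCons peval_monom scaleC_one
        left_diff_distrib mult.assoc)
  moreover have "invertible_elem (scaleC z 1 - y)" if "z \<noteq> 0" for z
    using qn that unfolding quasinilpotent_def spectrum_def y_def by blast
  moreover have "poly q l = l * (1 - l ^ n)" for l
    by (simp add: q_def poly_monom algebra_simps)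
  ultimately have "invertible_elem (scaleC l 1 - a)" if "l \<noteq> 0" "l ^ n \<noteq> 1" for l
    using invertible_elem_resolvent_corners[OF pp ap ay yp] that by simp
  then have "spectrum a \<subseteq> insert 0 {z. z ^ n = 1}"
    by (auto simp: spectrum_def)
  with \<open>n > 0\<close> show ?thesis by blast
qed

lemma topologically_nilpotent_sub_power:
  fixes a :: "'a::complex_banach_algebra_1"
  assumes n: "n > 0" and sp: "spectrum a \<subseteq> insert 0 {z. z ^ n = 1}"
  shows "topologically_nilpotent (a - a ^ (n + 1))"
proof (rule topologically_nilpotentI_resolvent)
  fix l :: complex assume "l \<noteq> 0"
  define q where "q = monom 1 (n + 1) + [:l, -1:]"
  have "coeff q (n + 1) = 1" using n by (cases n) (simp_all add: q_def)
  then have "q \<noteq> 0" by auto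
  moreover have "\<mu> \<notin> spectrum a" if "poly q \<mu> = 0" for \<mu>
  proof -
    have "\<mu> ^ (n + 1) + l - \<mu> = 0" using that by (simp add: q_def poly_monom algebra_simps)
    then have "\<mu> \<noteq> 0" "\<mu> ^ n \<noteq> 1" using \<open>l \<noteq> 0\<close> by auto
    then show ?thesis using sp by auto
  qed
  ultimately have "invertible_elem (peval q a)" by (rule invertible_peval)
  moreover have "peval q a = scaleC l 1 - (a - a ^ (n + 1))"
    by (simp add: q_def peval_add peval_monom peval_pCons scaleC_one scaleC_minus_left algebra_simps)
  ultimately show "invertible_elem (scaleC l 1 - (a - a ^ (n + 1)))" by simp
qed

lemma complementary_corners_orthogonal:
  fixes u v p :: "'a::ring_1"
  assumes pp: "p * p = p" and up: "commute u p" and vp: "commute v p"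
  shows "(u * p) * (v * (1 - p)) = 0" "(v * (1 - p)) * (u * p) = 0"
proof -
  have orth: "p * (1 - p) = 0" "(1 - p) * p = 0"
    using pp by (simp_all add: algebra_simps)
  have "(u * p) * (v * (1 - p)) = u * (p * v) * (1 - p)" by (simp add: mult.assoc)
  also have "p * v = v * p" using vp by (simp add: commute_def)
  also have "u * (v * p) * (1 - p) = u * v * (p * (1 - p))" by (simp add: mult.assoc)
  finally show "(u * p) * (v * (1 - p)) = 0" using orth by simp
  have "(v * (1 - p)) * (u * p) = v * ((1 - p) * u) * p" by (simp add: mult.assoc)
  also have "(1 - p) * u = u * (1 - p)" using up by (simp add: commute_def algebra_simps)
  also have "v * (u * (1 - p)) * p = v * u * ((1 - p) * p)" by (simp add: mult.assoc)
  finally show "(v * (1 - p)) * (u * p) = 0" using orth by simp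
qed

lemma topologically_nilpotent_corner_sum:
  fixes a p :: "'a::{real_normed_algebra_1,banach}"
  assumes n: "n > 0" and pp: "p * p = p" and p: "p \<in> bicommutant a"
    and tn_e: "topologically_nilpotent (a ^ n - p)" and tn_q: "topologically_nilpotent (a - a ^ (n + 1))"
  shows "topologically_nilpotent ((a - a ^ (n + 1)) * p + a * (1 - p))"
proof (rule topologically_nilpotent_add_orthogonal)
  have "a - a ^ (n + 1) \<in> bicommutant a" "a ^ n - p \<in> bicommutant a" "1 - p \<in> bicommutant a"
    by (intro bicommutant_intros p)+
  then have qp: "commute (a - a ^ (n + 1)) p" and ep: "commute (a ^ n - p) (1 - p)"
    and ap: "commute a (1 - p)" and pa: "commute a p"
    using p bicommutant_self[of a] by (simp_all add: bicommutant_commute)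
  show "topologically_nilpotent ((a - a ^ (n + 1)) * p)"
    by (rule topologically_nilpotent_mult_commute(1)[OF tn_q qp])
  have "(a * (1 - p)) ^ n = a ^ n * (1 - p) ^ n"
    by (rule power_mult_commute[OF ap])
  also have "(1 - p) ^ n = 1 - p"
    using pp n by (intro idempotent_power) (simp_all add: algebra_simps)
  also have "a ^ n * (1 - p) = (a ^ n - p) * (1 - p)"
    using pp by (simp add: algebra_simps)
  finally have "topologically_nilpotent ((a * (1 - p)) ^ n)"
    using topologically_nilpotent_mult_commute(1)[OF tn_e ep] by simp
  then show "topologically_nilpotent (a * (1 - p))"
    by (rule topologically_nilpotent_root[OF n])
  show "(a - a ^ (n + 1)) * p * (a * (1 - p)) = 0" "a * (1 - p) * ((a - a ^ (n + 1)) * p) = 0"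
    by (rule complementary_corners_orthogonal[OF pp qp pa])+
qed

lemma gpi_Hirano_invertibleI_idempotent:
  fixes a p :: "'a::complex_banach_algebra_1"
  assumes n: "n > 0" and pp: "p * p = p" and p: "p \<in> bicommutant a"
    and tn_e: "topologically_nilpotent (a ^ n - p)" and tn_q: "topologically_nilpotent (a - a ^ (n + 1))"
  shows "gpi_Hirano_invertible a"
proof -
  define t where "t = (a ^ n - p) * p"
  have "a ^ n - p \<in> bicommutant a" by (intro bicommutant_intros p)
  then have "topologically_nilpotent t"
    unfolding t_def using p
    by (intro topologically_nilpotent_mult_commute(1)[OF tn_e] bicommutant_commute)
  then have inv: "invertible_elem (1 + t)"
    using topologically_nilpotent_invertible_one_minus[OF topologically_nilpotent_scaleR[of t "-1"]]
    by simp
  define x where "x = a ^ (n - 1) * p * inv_elem (1 + t)"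
  have "1 + t \<in> bicommutant a"
    unfolding t_def by (intro bicommutant_intros p)
  then have x: "x \<in> bicommutant a"
    unfolding x_def using p inv by (simp add: bicommutant_intros bicommutant_inv_elem)
  have pa: "p * a ^ k = a ^ k * p" for k
    using bicommutant_commute[OF p bicommutant_power[OF bicommutant_self]] by (simp add: commute_def)
  have "p * (1 + t) = p + p * a ^ n * p - p * p * p"
    by (simp add: t_def algebra_simps)
  also have "p * a ^ n * p = a ^ n * p" by (simp add: pa mult.assoc pp)
  finally have p_t: "p * (1 + t) = a ^ n * p" by (simp add: pp)
  have "a * x = a * a ^ (n - 1) * p * inv_elem (1 + t)" by (simp add: x_def mult.assoc)
  also have "a * a ^ (n - 1) = a ^ n" using n by (simp flip: power_Suc)
  also have "a ^ n * p * inv_elem (1 + t) = p"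
    using right_inv_elem[OF inv] by (simp flip: p_t add: mult.assoc)
  finally have ax: "a * x = p" .
  have xa: "x * a = a * x"
    using bicommutant_commute[OF x bicommutant_self] by (simp add: commute_def)
  have "x * a * x = p * x" by (simp add: xa ax)
  also have "\<dots> = p * a ^ (n - 1) * p * inv_elem (1 + t)" by (simp add: x_def mult.assoc)
  also have "\<dots> = a ^ (n - 1) * p * p * inv_elem (1 + t)" by (simp only: pa)
  also have "\<dots> = x" by (simp only: mult.assoc[of "a ^ (n - 1)" p p] pp x_def)
  finally have xax: "x * a * x = x" .
  have "a ^ (n + 2) = a ^ (n + 1) * a" using power_Suc2[of a "n + 1"] by simp
  then have split: "a - a ^ (n + 2) * x = (a - a ^ (n + 1)) * p + a * (1 - p)"
    by (simp add: mult.assoc ax algebra_simps)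
  have "quasinilpotent (a - a ^ (n + 2) * x)"
    unfolding split using topologically_nilpotent_corner_sum[OF n pp p tn_e tn_q]
    by (rule topologically_nilpotent_imp_quasinilpotent)
  with n xax xa[symmetric] show ?thesis
    unfolding gpi_Hirano_invertible_def by blast
qed

lemma gpi_Hirano_invertibleI_spectrum:
  fixes a :: "'a::complex_banach_algebra_1"
  assumes n: "n > 0" and sp: "spectrum a \<subseteq> insert 0 {z. z ^ n = 1}"
  shows "gpi_Hirano_invertible a"
proof -
  have tn_q: "topologically_nilpotent (a - a ^ (n + 1))"
    by (rule topologically_nilpotent_sub_power[OF n sp])
  have "a ^ (n - 1) * a = a ^ n" using n by (simp flip: power_Suc2)
  then have "a ^ n - a ^ n * a ^ n = a ^ (n - 1) * (a - a ^ (n + 1))"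
    by (simp add: right_diff_distrib power_add flip: mult.assoc)
  moreover have "commute (a - a ^ (n + 1)) (a ^ (n - 1))"
    by (rule bicommutant_commute[of _ a]) (intro bicommutant_intros)+
  ultimately have "topologically_nilpotent (a ^ n - a ^ n * a ^ n)"
    using topologically_nilpotent_mult_commute(2)[OF tn_q] by simp
  then obtain p where "p * p = p" "p \<in> bicommutant (a ^ n)" "topologically_nilpotent (a ^ n - p)"
    by (rule idempotent_lifting)
  moreover have "a ^ n \<in> bicommutant a" by (intro bicommutant_intros)
  ultimately show ?thesis
    using gpi_Hirano_invertibleI_idempotent[OF n _ _ _ tn_q] bicommutant_trans by blast
qed

section \<open>Spectra of sums\<close>

definition killed_by_words :: "'a::ring_1 \<Rightarrow> 'a \<Rightarrow> nat \<Rightarrow> 'a \<Rightarrow> bool" where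
  "killed_by_words a b m v \<longleftrightarrow> (\<forall>ws. set ws \<subseteq> {a, b} \<longrightarrow> m \<le> length ws \<longrightarrow> prod_list ws * v = 0)"

lemma killed_by_words_hypothesis:
  assumes "\<forall>\<alpha>s. length \<alpha>s = k \<and> set \<alpha>s \<subseteq> {a, b} \<longrightarrow> prod_list \<alpha>s * a * b = 0"
  shows "killed_by_words a b k (a * b)"
  unfolding killed_by_words_def
proof (intro allI impI)
  fix ws :: "'a list" assume ws: "set ws \<subseteq> {a, b}" "k \<le> length ws"
  define us where "us = drop (length ws - k) ws"
  have "length us = k" "set us \<subseteq> {a, b}"
    using ws set_drop_subset[of "length ws - k" ws] by (auto simp: us_def)
  then have "prod_list us * a * b = 0" using assms by blast
  moreover have "ws = take (length ws - k) ws @ us" by (simp add: us_def)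
  then have "prod_list ws * (a * b) = prod_list (take (length ws - k) ws) * (prod_list us * a * b)"
    by (metis mult.assoc prod_list.append)
  ultimately show "prod_list ws * (a * b) = 0" by simp
qed

lemma killed_by_words_0: "killed_by_words a b 0 v \<Longrightarrow> v = 0"
  unfolding killed_by_words_def by (drule spec[of _ "[]"]) simp

lemma killed_by_words_mono: "killed_by_words a b m v \<Longrightarrow> m \<le> m' \<Longrightarrow> killed_by_words a b m' v"
  unfolding killed_by_words_def by auto

lemma killed_by_words_mult:
  assumes "killed_by_words a b (Suc m) v" "c \<in> {a, b}"
  shows "killed_by_words a b m (c * v)"
  unfolding killed_by_words_def
proof (intro allI impI)
  fix ws assume "set ws \<subseteq> {a, b}" "m \<le> length ws"
  then have "set (ws @ [c]) \<subseteq> {a, b}" "Suc m \<le> length (ws @ [c])"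
    using assms(2) by auto
  then have "prod_list (ws @ [c]) * v = 0"
    using assms(1) unfolding killed_by_words_def by blast
  then show "prod_list ws * (c * v) = 0" by (simp add: mult.assoc)
qed

lemma killed_by_words_add:
  "killed_by_words a b m v \<Longrightarrow> killed_by_words a b m w \<Longrightarrow> killed_by_words a b m (v + w)"
  unfolding killed_by_words_def by (simp add: distrib_left)

lemma killed_by_words_sum:
  "(\<And>i. i \<in> I \<Longrightarrow> killed_by_words a b m (f i)) \<Longrightarrow> killed_by_words a b m (sum f I)"
  unfolding killed_by_words_def by (simp add: sum_distrib_left sum.neutral)

lemma killed_by_words_scaleC:
  "killed_by_words a b m v \<Longrightarrow> killed_by_words a b m (scaleC c (v::'a::complex_banach_algebra_1))"
  unfolding killed_by_words_def by (simp add: mult_scaleC_right)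

lemma killed_by_words_power_sum:
  "killed_by_words a b (m + j) v \<Longrightarrow> killed_by_words a b m ((a + b) ^ j * v)"
proof (induction j arbitrary: v)
  case (Suc j)
  then have "killed_by_words a b (m + j) (a * v)" "killed_by_words a b (m + j) (b * v)"
    by (simp_all add: killed_by_words_mult)
  then have "killed_by_words a b (m + j) ((a + b) * v)"
    by (simp add: distrib_right killed_by_words_add)
  moreover have "(a + b) ^ Suc j * v = (a + b) ^ j * ((a + b) * v)"
    by (metis mult.assoc power_Suc2)
  ultimately show ?case
    using Suc.IH[of "(a + b) * v"] by simp
qed simp

text \<open>The element \<open>\<Sum>\<^sub>j\<^sub><\<^sub>k z\<^sup>-\<^sup>j\<^sup>-\<^sup>1 (a + b)\<^sup>j a b\<close> is the product of the resolvent of \<open>a + b\<close> with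
  \<open>a b\<close>; the series terminates because \<open>(a + b)\<^sup>k a b = 0\<close>.\<close>

definition resolvent_ab :: "'a::complex_banach_algebra_1 \<Rightarrow> 'a \<Rightarrow> nat \<Rightarrow> complex \<Rightarrow> 'a" where
  "resolvent_ab a b k z = (\<Sum>j<k. scaleC ((1 / z) ^ Suc j) ((a + b) ^ j * (a * b)))"

context
  fixes a b :: "'a::complex_banach_algebra_1" and k :: nat
  assumes words: "\<forall>\<alpha>s. length \<alpha>s = k \<and> set \<alpha>s \<subseteq> {a, b} \<longrightarrow> prod_list \<alpha>s * a * b = 0"
begin

lemma power_sum_mult_zero: "(a + b) ^ k * (a * b) = 0"
proof -
  have "killed_by_words a b 0 ((a + b) ^ k * (a * b))"
    by (rule killed_by_words_power_sum) (simp add: killed_by_words_hypothesis[OF words])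
  then show ?thesis by (rule killed_by_words_0)
qed

lemma killed_by_words_resolvent_ab:
  assumes "killed_by_words a b (m + 2) w"
  shows "killed_by_words a b m (resolvent_ab a b k z * w)"
proof -
  have "killed_by_words a b m (a * (b * w))"
    using assms by (simp add: killed_by_words_mult)
  then have "killed_by_words a b m ((a + b) ^ j * (a * (b * w)))" for j
    by (rule killed_by_words_power_sum[OF killed_by_words_mono]) simp
  then show ?thesis
    unfolding resolvent_ab_def sum_distrib_right
    by (intro killed_by_words_sum) (simp add: mult_scaleC_left mult.assoc killed_by_words_scaleC)
qed

lemma resolvent_ab_nilpotent: "resolvent_ab a b k z ^ Suc k = 0"
proof -
  let ?R = "resolvent_ab a b k z"
  have "killed_by_words a b k ((a + b) ^ j * (a * b))" for j
    by (rule killed_by_words_power_sum[OF killed_by_words_mono[OF killed_by_words_hypothesis[OF words]]])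
      simp
  then have killed: "killed_by_words a b k ?R"
    unfolding resolvent_ab_def by (intro killed_by_words_sum killed_by_words_scaleC)
  have iterate: "killed_by_words a b i (?R ^ m * w)" if "killed_by_words a b (2 * m + i) w" for m i w
    using that
  proof (induction m arbitrary: i)
    case (Suc m)
    then have "killed_by_words a b (i + 2) (?R ^ m * w)"
      using Suc.IH[of "i + 2"] by (simp add: algebra_simps)
    then show ?case
      using killed_by_words_resolvent_ab[of i "?R ^ m * w"] by (simp add: mult.assoc)
  qed simp
  have "killed_by_words a b (2 * k + 0) ?R"
    using killed by (rule killed_by_words_mono) simp
  then have "?R ^ k * ?R = 0"
    by (rule killed_by_words_0[OF iterate])
  then show ?thesis by (simp only: power_Suc2)
qed

lemma resolvent_ab_identity:
  assumes "z \<noteq> 0"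
  shows "(scaleC z 1 - (a + b)) * resolvent_ab a b k z = a * b"
proof -
  define T where "T j = scaleC ((1 / z) ^ j) ((a + b) ^ j * (a * b))" for j
  have step: "(scaleC z 1 - (a + b)) * scaleC ((1 / z) ^ Suc j) ((a + b) ^ j * (a * b)) = T j - T (Suc j)"
    for j
    using assms by (simp add: T_def left_diff_distrib mult_scaleC_right scaleC_diff_right scaleC_scaleC
        mult.assoc power_commutes)
  have "(scaleC z 1 - (a + b)) * resolvent_ab a b k z = (\<Sum>j<k. T j - T (Suc j))"
    unfolding resolvent_ab_def sum_distrib_left step ..
  also have "\<dots> = T 0 - T k" by (rule sum_lessThan_telescope')
  finally show ?thesis by (simp add: T_def power_sum_mult_zero scaleC_one)
qed

lemma resolvent_factorization:
  assumes "z \<noteq> 0"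
  shows "(scaleC z 1 - a) * (scaleC z 1 - b)
    = (scaleC z 1 - (a + b)) * (scaleC z 1 + resolvent_ab a b k z)"
proof -
  have "(scaleC z 1 - (a + b)) * (scaleC z 1 + resolvent_ab a b k z)
      = (scaleC z 1 - (a + b)) * scaleC z 1 + a * b"
    by (simp only: distrib_left resolvent_ab_identity[OF assms])
  also have "\<dots> = (scaleC z 1 - a) * (scaleC z 1 - b)"
    by (simp add: algebra_simps scaleC_diff_right scaleC_add_right)
  finally show ?thesis ..
qed

lemma invertible_resolvent_ab:
  assumes "z \<noteq> 0"
  shows "invertible_elem (scaleC z 1 + resolvent_ab a b k z)"
proof -
  have "(scaleC (- (1 / z)) (resolvent_ab a b k z)) ^ Suc k = 0"
    unfolding scaleC_power resolvent_ab_nilpotent by simp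
  then have "invertible_elem (1 - scaleC (- (1 / z)) (resolvent_ab a b k z))"
    by (rule invertible_elem_one_minus_nilpotent)
  then have "invertible_elem (scaleC z (1 - scaleC (- (1 / z)) (resolvent_ab a b k z)))"
    by (rule invertible_elem_scaleC[OF assms])
  then show ?thesis
    using assms by (simp add: scaleC_diff_right scaleC_add_right scaleC_scaleC scaleC_minus_left
        scaleC_one)
qed

lemma spectrum_add_subset: "spectrum (a + b) \<subseteq> insert 0 (spectrum a \<union> spectrum b)"
proof
  fix z assume z: "z \<in> spectrum (a + b)"
  show "z \<in> insert 0 (spectrum a \<union> spectrum b)"
  proof (rule ccontr)
    assume "z \<notin> insert 0 (spectrum a \<union> spectrum b)"
    then have "z \<noteq> 0" "invertible_elem (scaleC z 1 - a)" "invertible_elem (scaleC z 1 - b)"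
      by (auto simp: spectrum_def)
    then have "invertible_elem ((scaleC z 1 - a) * (scaleC z 1 - b)
        * inv_elem (scaleC z 1 + resolvent_ab a b k z))"
      by (blast intro: invertible_elem_mult invertible_elem_inv_elem invertible_resolvent_ab)
    moreover have "(scaleC z 1 - a) * (scaleC z 1 - b) * inv_elem (scaleC z 1 + resolvent_ab a b k z)
        = scaleC z 1 - (a + b)"
      using right_inv_elem[OF invertible_resolvent_ab[OF \<open>z \<noteq> 0\<close>]]
      by (simp add: resolvent_factorization[OF \<open>z \<noteq> 0\<close>] mult.assoc)
    ultimately show False using z by (simp add: spectrum_def)
  qed
qed

lemma spectrum_summands_subset:
  assumes F: "connected (- F)" "bounded F" "0 \<in> F" and sp: "spectrum (a + b) \<subseteq> F"
  shows "spectrum a \<subseteq> F" "spectrum b \<subseteq> F"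
proof -
  define M where "M z = (scaleC z 1 - a) * (scaleC z 1 - b)" for z
  have M: "invertible_elem (M z)" if "z \<in> - F" for z
  proof -
    have "z \<noteq> 0" "invertible_elem (scaleC z 1 - (a + b))" using that F sp by (auto simp: spectrum_def)
    then show ?thesis
      by (simp add: M_def resolvent_factorization invertible_elem_mult invertible_resolvent_ab)
  qed
  obtain z0 where "z0 \<in> - F" "max (norm a) (norm b) < cmod z0"
    using bounded_complement_far_point[OF \<open>bounded F\<close>] by blast
  have a: "invertible_elem (scaleC z 1 - a)" if "z \<in> - F" for z
  proof (rule invertible_elem_on_connected[OF F(1) _ _ _ \<open>z0 \<in> - F\<close> _ that])
    show "continuous_on (- F) (\<lambda>z. scaleC z 1 - a)" by (intro continuous_intros)
    show "continuous_on (- F) (\<lambda>z. (scaleC z 1 - b) * inv_elem (M z))"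
      unfolding M_def using M by (intro continuous_intros) (auto simp: M_def)
    show "(scaleC z 1 - a) * ((scaleC z 1 - b) * inv_elem (M z)) = 1" if "z \<in> - F" for z
      using right_inv_elem[OF M[OF that]] by (simp add: M_def mult.assoc)
    show "invertible_elem (scaleC z0 1 - a)"
      using \<open>max (norm a) (norm b) < cmod z0\<close> by (intro invertible_elem_resolvent_large) simp
  qed
  then show "spectrum a \<subseteq> F" by (auto simp: spectrum_def)
  have "invertible_elem (scaleC z 1 - b)" if "z \<in> - F" for z
  proof -
    have "scaleC z 1 - b = inv_elem (scaleC z 1 - a) * M z"
      using left_inv_elem[OF a[OF that]] by (simp add: M_def flip: mult.assoc)
    then show ?thesis
      using a[OF that] M[OF that] by (simp add: invertible_elem_mult invertible_elem_inv_elem)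
  qed
  then show "spectrum b \<subseteq> F" by (auto simp: spectrum_def)
qed

end

lemma connected_complement_finite: "finite F \<Longrightarrow> connected (- (F :: complex set))"
  by (simp add: path_connected_complement_countable countable_finite path_connected_imp_connected)

lemma gpi_Hirano_invertible_iff_spectrum:
  fixes a :: "'a::complex_banach_algebra_1"
  shows "gpi_Hirano_invertible a \<longleftrightarrow> (\<exists>n>0. spectrum a \<subseteq> insert 0 {z. z ^ n = 1})"
  using gpi_Hirano_invertible_spectrum gpi_Hirano_invertibleI_spectrum by blast

theorem theorem3p4:
  fixes a b :: "'a::complex_banach_algebra_1" and k :: nat
  assumes "k > 0"
    and "\<forall>\<alpha>s. length \<alpha>s = k \<and> set \<alpha>s \<subseteq> {a, b} \<longrightarrow> prod_list \<alpha>s * a * b = 0"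
  shows "(gpi_Hirano_invertible a \<and> gpi_Hirano_invertible b) \<longleftrightarrow> gpi_Hirano_invertible (a + b)"
proof
  assume "gpi_Hirano_invertible a \<and> gpi_Hirano_invertible b"
  then obtain m n where "m > 0" "spectrum a \<subseteq> insert 0 {z. z ^ m = 1}"
    and "n > 0" "spectrum b \<subseteq> insert 0 {z. z ^ n = 1}"
    by (auto simp: gpi_Hirano_invertible_iff_spectrum)
  moreover have "z ^ (m * n) = 1" if "z ^ m = 1 \<or> z ^ n = 1" for z :: complex
  proof -
    have "z ^ (m * n) = (z ^ m) ^ n" by (rule power_mult)
    moreover have "z ^ (m * n) = (z ^ n) ^ m" by (subst mult.commute) (rule power_mult)
    ultimately show ?thesis using that by (metis power_one)
  qed
  ultimately have "spectrum a \<union> spectrum b \<subseteq> insert 0 {z. z ^ (m * n) = 1}"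
    by blast
  then have "spectrum (a + b) \<subseteq> insert 0 {z. z ^ (m * n) = 1}"
    using spectrum_add_subset[OF assms(2)] by blast
  moreover have "m * n > 0" using \<open>m > 0\<close> \<open>n > 0\<close> by simp
  ultimately show "gpi_Hirano_invertible (a + b)"
    by (intro gpi_Hirano_invertibleI_spectrum)
next
  assume "gpi_Hirano_invertible (a + b)"
  then obtain n where n: "n > 0" and sp: "spectrum (a + b) \<subseteq> insert 0 {z. z ^ n = 1}"
    by (auto simp: gpi_Hirano_invertible_iff_spectrum)
  then have "finite (insert 0 {z::complex. z ^ n = 1})"
    by (simp add: finite_roots_unity)
  then have "spectrum a \<subseteq> insert 0 {z. z ^ n = 1} \<and> spectrum b \<subseteq> insert 0 {z. z ^ n = 1}"
    using spectrum_summands_subset[OF assms(2) _ _ _ sp]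
    by (simp add: connected_complement_finite finite_imp_bounded)
  then show "gpi_Hirano_invertible a \<and> gpi_Hirano_invertible b"
    using gpi_Hirano_invertibleI_spectrum[OF n] by blast
qed

end
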